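(* Let $a,b>0$ and let $(u,v)\in\mathcal P_{(a,b)}$ with $u\ge0$, $v\ge0$, $u\ne0$, $v\ne0$ and $J(u,v)=C_{(a,b)}$, and suppose that for some $\lambda_1,\lambda_2\in\mathbb R$, $(u,v)$ is a weak solution of $-\partial_{xx}u+(-\Delta)_y^su+\lambda_1u=\mu_1u^{p-1}+\beta r_1u^{r_1-1}v^{r_2}$, $-\partial_{xx}v+(-\Delta)_y^sv+\lambda_2v=\mu_2v^{q-1}+\beta r_2u^{r_1}v^{r_2-1}$ in $\mathbb R^2$. If $\lambda_1>0$ then $u\in S_a$; if $\lambda_2>0$ then $v\in S_b$.
   Context: Standing assumptions: $s\in(\tfrac12,1)$, $\mu_1,\mu_2,\beta>0$, $r_1,r_2>1$, $\frac{2(1+3s)}{1+s}<p,q,r_1+r_2<2_s=\frac{2(1+s)}{1-s}$. $\mathcal H^{1,s}(\mathbb R^2)$: $u\in L^2(\mathbb R^2)$ with $\partial_xu,(-\Delta)_y^{s/2}u\in L^2$ ($(-\Delta)_y^{s/2}$ the fractional Laplacian in $y$ only); $\mathbb D=\mathcal H^{1,s}\times\mathcal H^{1,s}$; $K(u)=\int(|\partial_xu|^2+|(-\Delta)_y^{s/2}u|^2)$. $J(u,v)=\tfrac12K(u)+\tfrac12K(v)-\frac{\mu_1}{p}\|u\|_p^p-\frac{\mu_2}{q}\|v\|_q^q-\beta\int|u|^{r_1}|v|^{r_2}$; $P(u,v)=sK(u)+sK(v)-\frac{(1+s)(p-2)}{2p}\mu_1\|u\|_p^p-\frac{(1+s)(q-2)}{2q}\mu_2\|v\|_q^q-\frac{(1+s)(r_1+r_2-2)}{2}\beta\int|u|^{r_1}|v|^{r_2}$;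 $\mathcal P=\{(u,v)\ne(0,0):P(u,v)=0\}$; $S_a=\{u:\|u\|_2^2=a\}$, $D_a=\{u:\|u\|_2^2\le a\}$; $\mathcal P_{(a,b)}=\mathcal P\cap(D_a\times D_b)$; $C_{(a,b)}=\inf_{\mathcal P_{(a,b)}}J$. *)

theory Defs
  imports "HOL-Analysis.Analysis"
begin

text \<open>Points of the plane are pairs (x,y) :: real \<times> real; x = fst, y = snd.
  Functions are real-valued representatives; integrals are Lebesgue (Bochner) integrals
  w.r.t. lborel.\<close>

definition L2fun :: "(real \<times> real \<Rightarrow> real) \<Rightarrow> bool" where
  "L2fun u \<longleftrightarrow> u \<in> borel_measurable lborel \<and> integrable lborel (\<lambda>z. (u z)\<^sup>2)"

definition L2sq :: "(real \<times> real \<Rightarrow> real) \<Rightarrow> real" where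
  "L2sq u = (\<integral>z. (u z)\<^sup>2 \<partial>lborel)"

definition Lpp :: "real \<Rightarrow> (real \<times> real \<Rightarrow> real) \<Rightarrow> real" where
  "Lpp p u = (\<integral>z. \<bar>u z\<bar> powr p \<partial>lborel)"

definition test_x :: "(real \<times> real \<Rightarrow> real) \<Rightarrow> (real \<times> real \<Rightarrow> real) \<Rightarrow> bool" where
  "test_x phi phix \<longleftrightarrow> continuous_on UNIV phi \<and> continuous_on UNIV phix \<and>
     bounded {z. phi z \<noteq> 0} \<and>
     (\<forall>x y. ((\<lambda>t. phi (t, y)) has_real_derivative phix (x, y)) (at x))"

definition weak_dx :: "(real \<times> real \<Rightarrow> real) \<Rightarrow> (real \<times> real \<Rightarrow> real) \<Rightarrow> bool" where
  "weak_dx u g \<longleftrightarrow> L2fun g \<and>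
     (\<forall>phi phix. test_x phi phix \<longrightarrow>
        integrable lborel (\<lambda>z. u z * phix z) \<and> integrable lborel (\<lambda>z. g z * phi z) \<and>
        (\<integral>z. u z * phix z \<partial>lborel) = - (\<integral>z. g z * phi z \<partial>lborel))"

definition dx :: "(real \<times> real \<Rightarrow> real) \<Rightarrow> (real \<times> real \<Rightarrow> real)" where
  "dx u = (SOME g. weak_dx u g)"

text \<open>Normalising constant C(1,s) of the one-dimensional fractional Laplacian, so that
  norm((-Delta)^(s/2) w)^2 = C(1,s)/2 * double integral of |w(y)-w(y')|^2/|y-y'|^(1+2s).\<close>
definition Cfrac :: "real \<Rightarrow> real" where
  "Cfrac s = s * 4 powr s * Gamma ((1 + 2 * s) / 2) / (sqrt pi * Gamma (1 - s))"

definition gag :: "real \<Rightarrow> (real \<times> real \<Rightarrow> real) \<Rightarrow> (real \<times> real \<Rightarrow> real) \<Rightarrow> real \<times> real \<times> real \<Rightarrow> real" where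
  "gag s u w t = (case t of (x, y, y') \<Rightarrow>
      (u (x, y) - u (x, y')) * (w (x, y) - w (x, y')) / \<bar>y - y'\<bar> powr (1 + 2 * s))"

text \<open>Bilinear form  < (-Delta)_y^(s/2) u, (-Delta)_y^(s/2) w >_{L2}.\<close>
definition Efrac :: "real \<Rightarrow> (real \<times> real \<Rightarrow> real) \<Rightarrow> (real \<times> real \<Rightarrow> real) \<Rightarrow> real" where
  "Efrac s u w = Cfrac s / 2 * (\<integral>t. gag s u w t \<partial>lborel)"

definition H1s :: "real \<Rightarrow> (real \<times> real \<Rightarrow> real) set" where
  "H1s s = {u. L2fun u \<and> (\<exists>g. weak_dx u g) \<and> gag s u u \<in> borel_measurable lborel
               \<and> integrable lborel (gag s u u)}"

definition Kfun :: "real \<Rightarrow> (real \<times> real \<Rightarrow> real) \<Rightarrow> real" where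
  "Kfun s u = (\<integral>z. (dx u z)\<^sup>2 \<partial>lborel) + Efrac s u u"

definition coup :: "real \<Rightarrow> real \<Rightarrow> (real \<times> real \<Rightarrow> real) \<Rightarrow> (real \<times> real \<Rightarrow> real) \<Rightarrow> real" where
  "coup r1 r2 u v = (\<integral>z. \<bar>u z\<bar> powr r1 * \<bar>v z\<bar> powr r2 \<partial>lborel)"

definition Jfun :: "real \<Rightarrow> real \<Rightarrow> real \<Rightarrow> real \<Rightarrow> real \<Rightarrow> real \<Rightarrow> real \<Rightarrow> real \<Rightarrow>
    (real \<times> real \<Rightarrow> real) \<Rightarrow> (real \<times> real \<Rightarrow> real) \<Rightarrow> real" where
  "Jfun s p q r1 r2 mu1 mu2 beta u v =
     Kfun s u / 2 + Kfun s v / 2 - mu1 / p * Lpp p u - mu2 / q * Lpp q v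
     - beta * coup r1 r2 u v"

definition Pfun :: "real \<Rightarrow> real \<Rightarrow> real \<Rightarrow> real \<Rightarrow> real \<Rightarrow> real \<Rightarrow> real \<Rightarrow> real \<Rightarrow>
    (real \<times> real \<Rightarrow> real) \<Rightarrow> (real \<times> real \<Rightarrow> real) \<Rightarrow> real" where
  "Pfun s p q r1 r2 mu1 mu2 beta u v =
     s * Kfun s u + s * Kfun s v
     - (1 + s) * (p - 2) / (2 * p) * mu1 * Lpp p u
     - (1 + s) * (q - 2) / (2 * q) * mu2 * Lpp q v
     - (1 + s) * (r1 + r2 - 2) / 2 * beta * coup r1 r2 u v"

text \<open>(u,v) \<noteq> (0,0) in L2-sense: not both almost everywhere zero.\<close>
definition Pset_ab :: "real \<Rightarrow> real \<Rightarrow> real \<Rightarrow> real \<Rightarrow> real \<Rightarrow> real \<Rightarrow> real \<Rightarrow> real \<Rightarrow> real \<Rightarrow> real \<Rightarrow>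
    ((real \<times> real \<Rightarrow> real) \<times> (real \<times> real \<Rightarrow> real)) set" where
  "Pset_ab s p q r1 r2 mu1 mu2 beta a b =
     {(u, v). u \<in> H1s s \<and> v \<in> H1s s \<and>
        \<not> ((AE z in lborel. u z = 0) \<and> (AE z in lborel. v z = 0)) \<and>
        Pfun s p q r1 r2 mu1 mu2 beta u v = 0 \<and> L2sq u \<le> a \<and> L2sq v \<le> b}"

definition Cab :: "real \<Rightarrow> real \<Rightarrow> real \<Rightarrow> real \<Rightarrow> real \<Rightarrow> real \<Rightarrow> real \<Rightarrow> real \<Rightarrow> real \<Rightarrow> real \<Rightarrow> real" where
  "Cab s p q r1 r2 mu1 mu2 beta a b =
     (INF uv \<in> Pset_ab s p q r1 r2 mu1 mu2 beta a b. Jfun s p q r1 r2 mu1 mu2 beta (fst uv) (snd uv))"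

end

theory Submission
  imports Defs
begin

text \<open>Suppose \<open>\<lambda>\<^sub>1 > 0\<close> but \<open>\<parallel>u\<parallel>\<^sub>2\<^sup>2 < a\<close>. Consider the two-parameter family
  \<open>(t \<sigma>\<^bsup>(1+s)/2\<^esup> u(\<sigma>\<^sup>s x, \<sigma> y), \<sigma>\<^bsup>(1+s)/2\<^esup> v(\<sigma>\<^sup>s x, \<sigma> y))\<close>, along which \<open>J\<close> and \<open>P\<close> are explicit
  functions of \<open>(t, \<sigma>)\<close>. Testing the equation for \<open>u\<close> with \<open>u\<close> itself shows that
  \<open>\<partial>\<^sub>t J = K(u) - \<mu>\<^sub>1\<parallel>u\<parallel>\<^sub>p\<^sup>p - \<beta> r\<^sub>1\<integral>|u|\<^bsup>r\<^sub>1\<^esup>|v|\<^bsup>r\<^sub>2\<^esup> = -\<lambda>\<^sub>1\<parallel>u\<parallel>\<^sub>2\<^sup>2 < 0\<close> at \<open>t = \<sigma> = 1\<close>. So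
  raising \<open>t\<close> slightly lowers \<open>J\<close> while the mass \<open>t\<^sup>2\<parallel>u\<parallel>\<^sub>2\<^sup>2\<close> stays below \<open>a\<close>; the intermediate
  value theorem then readjusts \<open>\<sigma>\<close> near \<open>1\<close> to return to the Pohozaev manifold, and this does
  not raise \<open>J\<close> because \<open>\<sigma> = 1\<close> maximises \<open>J\<close> along the \<open>\<sigma>\<close>-fibre through a point of \<open>P\<close>.
  The resulting competitor contradicts minimality. The case of \<open>v\<close> is symmetric.\<close>

section \<open>Diagonal changes of variables\<close>

lemma lborel_integral_diagonal_scaling:
  fixes c :: "'a::euclidean_space \<Rightarrow> real" and f :: "'a \<Rightarrow> real"
  assumes c: "\<And>j. j \<in> Basis \<Longrightarrow> c j \<noteq> 0" and f[measurable]: "f \<in> borel_measurable borel"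
  shows "integral\<^sup>L lborel f = (\<Prod>j\<in>Basis. \<bar>c j\<bar>) * (\<integral>x. f (\<Sum>j\<in>Basis. (c j * (x \<bullet> j)) *\<^sub>R j) \<partial>lborel)"
    and "integrable lborel f \<longleftrightarrow> integrable lborel (\<lambda>x. f (\<Sum>j\<in>Basis. (c j * (x \<bullet> j)) *\<^sub>R j))"
proof -
  define T where "T = (\<lambda>x::'a. (0::'a) + (\<Sum>j\<in>Basis. (c j * (x \<bullet> j)) *\<^sub>R j))"
  have [measurable]: "T \<in> borel \<rightarrow>\<^sub>M borel" unfolding T_def by simp
  have L: "lborel = density (distr lborel borel T) (\<lambda>_. (\<Prod>j\<in>Basis. \<bar>c j\<bar>))"
    unfolding T_def by (rule lborel_affine_euclidean[OF c])
  have pos: "0 \<le> (\<Prod>j\<in>Basis. \<bar>c j\<bar>)" by (simp add: prod_nonneg)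
  have "integral\<^sup>L lborel f = integral\<^sup>L (distr lborel borel T) (\<lambda>x. (\<Prod>j\<in>Basis. \<bar>c j\<bar>) *\<^sub>R f x)"
    using pos by (subst L) (subst integral_density, auto)
  also have "\<dots> = (\<integral>x. (\<Prod>j\<in>Basis. \<bar>c j\<bar>) *\<^sub>R f (T x) \<partial>lborel)"
    by (subst integral_distr) auto
  finally show "integral\<^sup>L lborel f = (\<Prod>j\<in>Basis. \<bar>c j\<bar>) * (\<integral>x. f (\<Sum>j\<in>Basis. (c j * (x \<bullet> j)) *\<^sub>R j) \<partial>lborel)"
    unfolding T_def by simp
  have "integrable lborel f \<longleftrightarrow> integrable (distr lborel borel T) (\<lambda>x. (\<Prod>j\<in>Basis. \<bar>c j\<bar>) *\<^sub>R f x)"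
    using pos by (subst L) (subst integrable_density, auto)
  also have "\<dots> \<longleftrightarrow> integrable lborel (\<lambda>x. (\<Prod>j\<in>Basis. \<bar>c j\<bar>) *\<^sub>R f (T x))"
    by (subst integrable_distr_eq) auto
  also have "\<dots> \<longleftrightarrow> integrable lborel (\<lambda>x. f (T x))"
    using c by simp
  finally show "integrable lborel f \<longleftrightarrow> integrable lborel (\<lambda>x. f (\<Sum>j\<in>Basis. (c j * (x \<bullet> j)) *\<^sub>R j))"
    unfolding T_def by simp
qed

lemma lborel_integral_scale_pair:
  fixes f :: "real \<times> real \<Rightarrow> real" and \<alpha> \<gamma> :: real
  assumes "\<alpha> > 0" "\<gamma> > 0" and f[measurable]: "f \<in> borel_measurable borel"
  shows "(\<integral>z. f (\<alpha> * fst z, \<gamma> * snd z) \<partial>lborel) = integral\<^sup>L lborel f / (\<alpha> * \<gamma>)"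
    and "integrable lborel (\<lambda>z. f (\<alpha> * fst z, \<gamma> * snd z)) \<longleftrightarrow> integrable lborel f"
proof -
  let ?c = "\<lambda>j::real \<times> real. if j = (1, 0) then \<alpha> else \<gamma>"
  have c: "\<And>j. j \<in> Basis \<Longrightarrow> ?c j \<noteq> 0" using assms by auto
  have T: "(\<Sum>j\<in>Basis. (?c j * (z \<bullet> j)) *\<^sub>R j) = (\<alpha> * fst z, \<gamma> * snd z)" for z
    by (cases z) (simp add: Basis_prod_def sum.union_disjoint inner_Pair)
  have P: "(\<Prod>j\<in>Basis. \<bar>?c j\<bar>) = \<alpha> * \<gamma>"
    using assms by (simp add: Basis_prod_def prod.union_disjoint)
  show "(\<integral>z. f (\<alpha> * fst z, \<gamma> * snd z) \<partial>lborel) = integral\<^sup>L lborel f / (\<alpha> * \<gamma>)"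
    using lborel_integral_diagonal_scaling(1)[where c="?c", OF c f, unfolded T P] assms by simp
  show "integrable lborel (\<lambda>z. f (\<alpha> * fst z, \<gamma> * snd z)) \<longleftrightarrow> integrable lborel f"
    using lborel_integral_diagonal_scaling(2)[where c="?c", OF c f, unfolded T] by simp
qed

lemma lborel_integral_scale_triple:
  fixes f :: "real \<times> real \<times> real \<Rightarrow> real" and \<alpha> \<gamma> :: real
  assumes "\<alpha> > 0" "\<gamma> > 0" and f[measurable]: "f \<in> borel_measurable borel"
  shows "(\<integral>z. f (\<alpha> * fst z, \<gamma> * fst (snd z), \<gamma> * snd (snd z)) \<partial>lborel)
           = integral\<^sup>L lborel f / (\<alpha> * \<gamma> * \<gamma>)"
    and "integrable lborel (\<lambda>z. f (\<alpha> * fst z, \<gamma> * fst (snd z), \<gamma> * snd (snd z)))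
           \<longleftrightarrow> integrable lborel f"
proof -
  let ?c = "\<lambda>j::real \<times> real \<times> real. if j = (1, 0, 0) then \<alpha> else \<gamma>"
  have c: "\<And>j. j \<in> Basis \<Longrightarrow> ?c j \<noteq> 0" using assms by auto
  have T: "(\<Sum>j\<in>Basis. (?c j * (z \<bullet> j)) *\<^sub>R j) = (\<alpha> * fst z, \<gamma> * fst (snd z), \<gamma> * snd (snd z))"
    for z by (cases z) (auto simp: Basis_prod_def sum.union_disjoint inner_Pair zero_prod_def)
  have P: "(\<Prod>j\<in>Basis. \<bar>?c j\<bar>) = \<alpha> * \<gamma> * \<gamma>"
    using assms by (auto simp: Basis_prod_def prod.union_disjoint zero_prod_def)
  show "(\<integral>z. f (\<alpha> * fst z, \<gamma> * fst (snd z), \<gamma> * snd (snd z)) \<partial>lborel)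
           = integral\<^sup>L lborel f / (\<alpha> * \<gamma> * \<gamma>)"
    using lborel_integral_diagonal_scaling(1)[where c="?c", OF c f, unfolded T P] assms by simp
  show "integrable lborel (\<lambda>z. f (\<alpha> * fst z, \<gamma> * fst (snd z), \<gamma> * snd (snd z)))
           \<longleftrightarrow> integrable lborel f"
    using lborel_integral_diagonal_scaling(2)[where c="?c", OF c f, unfolded T] by simp
qed


section \<open>Uniqueness of weak partial derivatives\<close>

lemma emeasure_density_max0_eq_integral:
  fixes h :: "real \<times> real \<Rightarrow> real"
  assumes [measurable]: "h \<in> borel_measurable borel" "X \<in> sets borel"
    and int: "integrable lborel (\<lambda>z. h z * indicator X z)"
  shows "emeasure (density lborel (\<lambda>z. ennreal (max 0 (h z)))) X
           = ennreal (\<integral>z. max 0 (h z) * indicator X z \<partial>lborel)"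
proof -
  have "integrable lborel (\<lambda>z. max 0 (h z) * indicator X z)"
    by (rule Bochner_Integration.integrable_bound[OF int]) (auto simp: indicator_def)
  moreover have "emeasure (density lborel (\<lambda>z. ennreal (max 0 (h z)))) X
      = (\<integral>\<^sup>+z. ennreal (max 0 (h z) * indicator X z) \<partial>lborel)"
    by (subst emeasure_density) (auto intro!: nn_integral_cong split: split_indicator)
  ultimately show ?thesis by (simp add: nn_integral_eq_integral)
qed

lemma AE_zero_if_box_integrals_zero:
  fixes h :: "real \<times> real \<Rightarrow> real"
  assumes hm[measurable]: "h \<in> borel_measurable borel"
    and loc: "\<And>a b. integrable lborel (\<lambda>z. h z * indicator (box a b) z)"
    and zero: "\<And>a b. (\<integral>z. h z * indicator (box a b) z \<partial>lborel) = 0"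
  shows "AE z in lborel. h z = 0"
proof -
  define M where "M = density lborel (\<lambda>z. ennreal (max 0 (h z)))"
  define N where "N = density lborel (\<lambda>z. ennreal (max 0 (- h z)))"
  let ?E = "range (\<lambda>(a, b). box a b :: (real \<times> real) set)"
  have MN: "emeasure M X = emeasure N X" and fin: "emeasure M X \<noteq> \<infinity>" if "X \<in> ?E" for X
  proof -
    obtain a b where X: "X = box a b" using \<open>X \<in> ?E\<close> by auto
    have "integrable lborel (\<lambda>z. - h z * indicator X z)" using loc[of a b] by (simp add: X)
    note eM = emeasure_density_max0_eq_integral[OF hm _ loc[of a b], folded X M_def]
      and eN = emeasure_density_max0_eq_integral[OF _ _ this, folded N_def]
    have "(\<integral>z. h z * indicator X z \<partial>lborel) =
          (\<integral>z. max 0 (h z) * indicator X z - max 0 (- h z) * indicator X z \<partial>lborel)"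
      by (auto intro!: Bochner_Integration.integral_cong simp: indicator_def)
    also have "\<dots> = (\<integral>z. max 0 (h z) * indicator X z \<partial>lborel) - (\<integral>z. max 0 (- h z) * indicator X z \<partial>lborel)"
      using loc[of a b] by (intro Bochner_Integration.integral_diff; rule Bochner_Integration.integrable_bound)
        (auto simp: X indicator_def)
    finally show "emeasure M X = emeasure N X"
      using eM eN zero[of a b] X by simp
    show "emeasure M X \<noteq> \<infinity>" using eM X by simp
  qed
  have "M = N"
  proof (rule measure_eqI_generator_eq[where E="?E" and \<Omega>=UNIV])
    show "Int_stable ?E" by (auto simp: Int_stable_def box_Int_box)
    show "sets M = sigma_sets UNIV ?E" "sets N = sigma_sets UNIV ?E"
      by (simp_all add: M_def N_def borel_eq_box)
    let ?A = "\<lambda>n::nat. box (- (real n *\<^sub>R One)) (real n *\<^sub>R One) :: (real \<times> real) set"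
    show "range ?A \<subseteq> ?E" "(\<Union>i. ?A i) = UNIV"
      unfolding UN_box_eq_UNIV by auto
    show "emeasure M (?A i) \<noteq> \<infinity>" for i by (rule fin) auto
  qed (use MN in auto)
  hence "AE z in lborel. ennreal (max 0 (h z)) = ennreal (max 0 (- h z))"
    unfolding M_def N_def by (intro sigma_finite_measure.density_unique[OF sigma_finite_lborel]) auto
  thus ?thesis
    by eventually_elim (auto simp: max_def split: if_splits)
qed

text \<open>Products of rescaled \<open>C\<^sup>1\<close> steps give test functions converging boundedly to the
  indicator of an open box, so a function whose integrals against all test functions vanish
  has vanishing integral over every box.\<close>

definition ramp_sq :: "real \<Rightarrow> real" where
  "ramp_sq t = (max 0 t)\<^sup>2"

definition smooth_step :: "real \<Rightarrow> real" where
  "smooth_step t = 2 * ramp_sq t - 4 * ramp_sq (t - 1/2) + 2 * ramp_sq (t - 1)"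

definition smooth_step' :: "real \<Rightarrow> real" where
  "smooth_step' t = 4 * max 0 t - 8 * max 0 (t - 1/2) + 4 * max 0 (t - 1)"

lemma ramp_sq_has_real_derivative: "(ramp_sq has_real_derivative 2 * max 0 t) (at t)"
proof (cases t "0::real" rule: linorder_cases)
  case less
  have "((\<lambda>y. 0) has_real_derivative 0) (at t)" by simp
  hence "(ramp_sq has_real_derivative 0) (at t)"
    by (rule has_field_derivative_transform_within_open[where S="{..<0}"])
       (use less in \<open>auto simp: ramp_sq_def\<close>)
  thus ?thesis using less by simp
next
  case equal
  have "(\<lambda>y. (ramp_sq y - ramp_sq 0) / (y - 0)) = (\<lambda>y. max 0 y)"
    by (auto simp: ramp_sq_def max_def power2_eq_square)
  moreover have "((\<lambda>y. max 0 y) \<longlongrightarrow> max 0 (0::real)) (at 0)"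
    by (intro tendsto_intros)
  ultimately show ?thesis using equal by (simp add: has_field_derivative_iff)
next
  case greater
  have "((\<lambda>y. y\<^sup>2) has_real_derivative 2 * t) (at t)"
    by (auto intro!: derivative_eq_intros)
  hence "(ramp_sq has_real_derivative 2 * t) (at t)"
    by (rule has_field_derivative_transform_within_open[where S="{0<..}"])
       (use greater in \<open>auto simp: ramp_sq_def\<close>)
  thus ?thesis using greater by simp
qed

lemma smooth_step_has_real_derivative: "(smooth_step has_real_derivative smooth_step' t) (at t)"
proof -
  have shift: "((\<lambda>z. ramp_sq (z - c)) has_real_derivative 2 * max 0 (t - c)) (at t)" for c
  proof -
    have "((\<lambda>z. z - c) has_real_derivative 1) (at t)" by (auto intro!: derivative_eq_intros)
    from DERIV_chain2[OF ramp_sq_has_real_derivative this] show ?thesis by simp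
  qed
  have "((\<lambda>z. 2 * ramp_sq (z - 0) - 4 * ramp_sq (z - 1/2) + 2 * ramp_sq (z - 1)) has_real_derivative
      2 * (2 * max 0 (t - 0)) - 4 * (2 * max 0 (t - 1/2)) + 2 * (2 * max 0 (t - 1))) (at t)"
    by (intro DERIV_add DERIV_diff DERIV_cmult shift)
  thus ?thesis unfolding smooth_step_def[abs_def] smooth_step'_def by (simp add: algebra_simps)
qed

lemma continuous_on_smooth_step [continuous_intros]:
  "continuous_on S f \<Longrightarrow> continuous_on S (\<lambda>x. smooth_step (f x))"
  and continuous_on_smooth_step' [continuous_intros]:
  "continuous_on S f \<Longrightarrow> continuous_on S (\<lambda>x. smooth_step' (f x))"
  unfolding smooth_step_def smooth_step'_def ramp_sq_def by (intro continuous_intros; assumption)+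

lemma smooth_step_eq_0: "t \<le> 0 \<Longrightarrow> smooth_step t = 0"
  by (simp add: smooth_step_def ramp_sq_def)

lemma smooth_step_eq_1: "t \<ge> 1 \<Longrightarrow> smooth_step t = 1"
  by (simp add: smooth_step_def ramp_sq_def max_def power2_eq_square algebra_simps)

lemma smooth_step_bounds: "0 \<le> smooth_step t \<and> smooth_step t \<le> 1"
proof -
  consider "t \<le> 0" | "0 \<le> t \<and> t \<le> 1/2" | "1/2 \<le> t \<and> t \<le> 1" | "t \<ge> 1" by linarith
  thus ?thesis
  proof cases
    case 2
    have "t * t \<le> (1/2) * (1/2)" using 2 by (intro mult_mono) auto
    thus ?thesis using 2 by (simp add: smooth_step_def ramp_sq_def power2_eq_square)
  next
    case 3
    have "(1 - t) * (1 - t) \<le> (1/2) * (1/2)" using 3 by (intro mult_mono) auto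
    moreover have "smooth_step t = 1 - 2 * ((1 - t) * (1 - t))"
      using 3 by (simp add: smooth_step_def ramp_sq_def power2_eq_square algebra_simps)
    ultimately show ?thesis by simp
  qed (auto simp: smooth_step_eq_0 smooth_step_eq_1)
qed

definition bump :: "real \<Rightarrow> real \<Rightarrow> real \<Rightarrow> real \<Rightarrow> real" where
  "bump a b n x = smooth_step (n * (x - a)) * smooth_step (n * (b - x))"

definition bump' :: "real \<Rightarrow> real \<Rightarrow> real \<Rightarrow> real \<Rightarrow> real" where
  "bump' a b n x = n * smooth_step' (n * (x - a)) * smooth_step (n * (b - x))
                   - n * smooth_step (n * (x - a)) * smooth_step' (n * (b - x))"

lemma bump_has_real_derivative: "(bump a b n has_real_derivative bump' a b n x) (at x)"
proof -
  have "((\<lambda>x. smooth_step (n * (x - a))) has_real_derivative smooth_step' (n * (x - a)) * n) (at x)"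
    "((\<lambda>x. smooth_step (n * (b - x))) has_real_derivative smooth_step' (n * (b - x)) * (- n)) (at x)"
    by (rule DERIV_chain2[OF smooth_step_has_real_derivative]; auto intro!: derivative_eq_intros)+
  from DERIV_mult[OF this] show ?thesis
    unfolding bump_def[abs_def] bump'_def by (simp add: algebra_simps)
qed

lemma bump_nonzero_imp: "n > 0 \<Longrightarrow> bump a b n x \<noteq> 0 \<Longrightarrow> a < x \<and> x < b"
proof -
  assume n: "n > 0" and "bump a b n x \<noteq> 0"
  hence "smooth_step (n * (x - a)) \<noteq> 0" "smooth_step (n * (b - x)) \<noteq> 0"
    by (auto simp: bump_def)
  hence "n * (x - a) > 0" "n * (b - x) > 0" using smooth_step_eq_0 by (metis not_le)+
  thus ?thesis using n by (simp add: zero_less_mult_iff)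
qed

lemma bump_bounds: "0 \<le> bump a b n x \<and> bump a b n x \<le> 1"
  using smooth_step_bounds[of "n * (x - a)"] smooth_step_bounds[of "n * (b - x)"]
  unfolding bump_def by (auto intro: mult_le_one)

lemma bump_tendsto_indicator:
  "(\<lambda>k. bump a b (real (Suc k)) x) \<longlonglongrightarrow> (if a < x \<and> x < b then 1 else 0)"
proof (cases "a < x \<and> x < b")
  case True
  hence m: "min (x - a) (b - x) > 0" by auto
  obtain N :: nat where N: "1 / min (x - a) (b - x) < real N" using reals_Archimedean2 by blast
  have "bump a b (real (Suc k)) x = 1" if "N \<le> k" for k
  proof -
    have "1 / min (x - a) (b - x) < real (Suc k)" using N that by linarith
    hence "1 < real (Suc k) * min (x - a) (b - x)" using m by (simp add: field_simps)
    hence "1 \<le> real (Suc k) * (x - a)" "1 \<le> real (Suc k) * (b - x)"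
      by (smt (verit) m mult_left_mono of_nat_0_le_iff min.cobounded1 min.cobounded2)+
    thus ?thesis by (simp add: bump_def smooth_step_eq_1)
  qed
  hence "\<forall>\<^sub>F k in sequentially. bump a b (real (Suc k)) x = 1"
    unfolding eventually_sequentially by blast
  thus ?thesis using True tendsto_eventually by simp
next
  case False
  hence "bump a b (real (Suc k)) x = 0" for k
    using bump_nonzero_imp[of "real (Suc k)" a b x] by auto
  moreover have "(if a < x \<and> x < b then 1 else 0) = (0::real)" using False by simp
  ultimately show ?thesis by (simp del: of_nat_Suc)
qed

definition box_bump :: "real \<times> real \<Rightarrow> real \<times> real \<Rightarrow> real \<Rightarrow> real \<times> real \<Rightarrow> real" where
  "box_bump a b n z = bump (fst a) (fst b) n (fst z) * bump (snd a) (snd b) n (snd z)"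

definition box_bump_dx :: "real \<times> real \<Rightarrow> real \<times> real \<Rightarrow> real \<Rightarrow> real \<times> real \<Rightarrow> real" where
  "box_bump_dx a b n z = bump' (fst a) (fst b) n (fst z) * bump (snd a) (snd b) n (snd z)"

lemma mem_box_pair:
  "(z::real \<times> real) \<in> box a b \<longleftrightarrow> fst a < fst z \<and> fst z < fst b \<and> snd a < snd z \<and> snd z < snd b"
  by (cases z; cases a; cases b) (auto simp: box_def Basis_prod_def inner_Pair)

lemma box_bump_nonzero_imp: "n > 0 \<Longrightarrow> box_bump a b n z \<noteq> 0 \<Longrightarrow> z \<in> box a b"
  unfolding box_bump_def mem_box_pair mult_eq_0_iff de_Morgan_disj
  by (metis bump_nonzero_imp)

lemma continuous_on_box_bump: "continuous_on UNIV (box_bump a b n)"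
  unfolding box_bump_def[abs_def] bump_def by (intro continuous_intros)

lemma measurable_box_bump [measurable]: "box_bump a b n \<in> borel_measurable borel"
  using continuous_on_box_bump by (rule borel_measurable_continuous_onI)

lemma test_x_box_bump: "n > 0 \<Longrightarrow> test_x (box_bump a b n) (box_bump_dx a b n)"
  unfolding test_x_def
proof (intro conjI allI)
  assume n: "n > 0"
  show "continuous_on UNIV (box_bump a b n)" by (rule continuous_on_box_bump)
  show "continuous_on UNIV (box_bump_dx a b n)"
    unfolding box_bump_dx_def[abs_def] bump_def bump'_def by (intro continuous_intros)
  have "{z. box_bump a b n z \<noteq> 0} \<subseteq> cbox a b"
  proof
    fix z assume "z \<in> {z. box_bump a b n z \<noteq> 0}"
    hence "z \<in> box a b" using box_bump_nonzero_imp[OF n] by simp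
    thus "z \<in> cbox a b" using box_subset_cbox by blast
  qed
  thus "bounded {z. box_bump a b n z \<noteq> 0}" by (rule bounded_subset[OF bounded_cbox])
  show "((\<lambda>t. box_bump a b n (t, y)) has_real_derivative box_bump_dx a b n (x, y)) (at x)" for x y
    unfolding box_bump_def box_bump_dx_def fst_conv snd_conv
    by (rule DERIV_cmult_right[OF bump_has_real_derivative])
qed

lemma box_bump_tendsto_indicator:
  "(\<lambda>k. box_bump a b (real (Suc k)) z) \<longlonglongrightarrow> indicator (box a b) z"
proof -
  have "(\<lambda>k. box_bump a b (real (Suc k)) z) \<longlonglongrightarrow>
     (if fst a < fst z \<and> fst z < fst b then 1 else 0) * (if snd a < snd z \<and> snd z < snd b then 1 else 0)"
    unfolding box_bump_def by (intro tendsto_mult bump_tendsto_indicator)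
  moreover have "(if fst a < fst z \<and> fst z < fst b then 1 else 0) * (if snd a < snd z \<and> snd z < snd b then 1 else 0)
      = (indicator (box a b) z :: real)"
    by (simp add: indicator_def mem_box_pair)
  ultimately show ?thesis by simp
qed

lemma box_bump_abs_le_indicator: "n > 0 \<Longrightarrow> \<bar>box_bump a b n z\<bar> \<le> indicator (box a b) z"
proof (cases "z \<in> box a b")
  case True
  thus ?thesis
    using bump_bounds[of "fst a" "fst b" n "fst z"] bump_bounds[of "snd a" "snd b" n "snd z"]
    by (auto simp: box_bump_def abs_mult intro: mult_le_one)
qed (use box_bump_nonzero_imp in fastforce)

lemma L2fun_integrable_on_box:
  assumes "L2fun h"
  shows "integrable lborel (\<lambda>z. h z * indicator (box a b) z)"
proof (rule Bochner_Integration.integrable_bound)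
  have [measurable]: "h \<in> borel_measurable borel" using assms by (simp add: L2fun_def)
  have "integrable lborel (indicator (box a b) :: _ \<Rightarrow> real)"
    using emeasure_bounded_finite[OF bounded_box[of a b]] by (intro integrable_real_indicator) auto
  thus "integrable lborel (\<lambda>z. (h z)\<^sup>2 + indicator (box a b) z)"
    using assms by (auto simp: L2fun_def)
  show "(\<lambda>z. h z * indicator (box a b) z) \<in> borel_measurable lborel" by simp
  have "\<bar>x\<bar> \<le> x\<^sup>2 + 1" for x :: real
  proof -
    have "0 \<le> (\<bar>x\<bar> - 1)\<^sup>2" by simp
    thus ?thesis by (simp add: power2_eq_square algebra_simps abs_mult_self_eq)
  qed
  thus "AE z in lborel. norm (h z * indicator (box a b) z) \<le> norm ((h z)\<^sup>2 + indicator (box a b) z)"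
    by (intro AE_I2) (auto simp: indicator_def)
qed

lemma integral_box_bump_tendsto:
  assumes [measurable]: "h \<in> borel_measurable borel"
    and int: "integrable lborel (\<lambda>z. h z * indicator (box a b) z)"
  shows "(\<lambda>k. \<integral>z. h z * box_bump a b (real (Suc k)) z \<partial>lborel)
           \<longlonglongrightarrow> (\<integral>z. h z * indicator (box a b) z \<partial>lborel)"
proof (rule integral_dominated_convergence[where w="\<lambda>z. \<bar>h z * indicator (box a b) z\<bar>"])
  show "integrable lborel (\<lambda>z. \<bar>h z * indicator (box a b) z\<bar>)" using int by auto
  show "AE z in lborel. (\<lambda>k. h z * box_bump a b (real (Suc k)) z) \<longlonglongrightarrow> h z * indicator (box a b) z"
    by (intro AE_I2 tendsto_mult tendsto_const box_bump_tendsto_indicator)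
  show "AE z in lborel. norm (h z * box_bump a b (real (Suc k)) z) \<le> \<bar>h z * indicator (box a b) z\<bar>" for k
    using box_bump_abs_le_indicator[of "real (Suc k)" a b]
    by (intro AE_I2) (auto simp: abs_mult intro: mult_left_mono)
qed measurable

lemma weak_dx_unique:
  assumes w1: "weak_dx u g1" and w2: "weak_dx u g2"
  shows "AE z in lborel. g1 z = g2 z"
proof -
  have L2: "L2fun g1" "L2fun g2" using w1 w2 by (auto simp: weak_dx_def)
  define h where "h z = g1 z - g2 z" for z
  have [measurable]: "g1 \<in> borel_measurable borel" "g2 \<in> borel_measurable borel"
    using L2 by (simp_all add: L2fun_def)
  have [measurable]: "h \<in> borel_measurable borel" unfolding h_def[abs_def] by measurable
  have box_int: "integrable lborel (\<lambda>z. h z * indicator (box a b) z)" for a b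
    unfolding h_def left_diff_distrib
    by (intro Bochner_Integration.integrable_diff L2fun_integrable_on_box L2)
  have test_zero: "(\<integral>z. h z * box_bump a b (real (Suc k)) z \<partial>lborel) = 0" for a b k
  proof -
    have t: "test_x (box_bump a b (real (Suc k))) (box_bump_dx a b (real (Suc k)))"
      by (rule test_x_box_bump) simp
    from w1 t have "integrable lborel (\<lambda>z. g1 z * box_bump a b (real (Suc k)) z)"
      "(\<integral>z. u z * box_bump_dx a b (real (Suc k)) z \<partial>lborel) = - (\<integral>z. g1 z * box_bump a b (real (Suc k)) z \<partial>lborel)"
      unfolding weak_dx_def by blast+
    moreover from w2 t have "integrable lborel (\<lambda>z. g2 z * box_bump a b (real (Suc k)) z)"
      "(\<integral>z. u z * box_bump_dx a b (real (Suc k)) z \<partial>lborel) = - (\<integral>z. g2 z * box_bump a b (real (Suc k)) z \<partial>lborel)"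
      unfolding weak_dx_def by blast+
    ultimately show ?thesis
      unfolding h_def left_diff_distrib by simp
  qed
  have "(\<integral>z. h z * indicator (box a b) z \<partial>lborel) = 0" for a b
    using integral_box_bump_tendsto[OF _ box_int] test_zero
    by (simp add: LIMSEQ_const_iff)
  hence "AE z in lborel. h z = 0"
    by (intro AE_zero_if_box_integrals_zero box_int) auto
  thus ?thesis by eventually_elim (simp add: h_def)
qed

section \<open>Anisotropic dilations\<close>

definition dilate :: "real \<Rightarrow> real \<Rightarrow> real \<Rightarrow> (real \<times> real \<Rightarrow> real) \<Rightarrow> real \<times> real \<Rightarrow> real" where
  "dilate c \<alpha> \<gamma> u = (\<lambda>z. c * u (\<alpha> * fst z, \<gamma> * snd z))"

lemma measurable_scale_pair [measurable]:
  "(\<lambda>z::real \<times> real. (\<alpha> * fst z, \<gamma> * snd z)) \<in> borel \<rightarrow>\<^sub>M borel"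
  by (intro borel_measurable_continuous_onI continuous_intros)

lemma measurable_scale_triple [measurable]:
  "(\<lambda>z::real \<times> real \<times> real. (\<alpha> * fst z, \<gamma> * fst (snd z), \<gamma> * snd (snd z))) \<in> borel \<rightarrow>\<^sub>M borel"
  by (intro borel_measurable_continuous_onI continuous_intros)

lemma measurable_dilate [measurable]:
  "u \<in> borel_measurable borel \<Longrightarrow> dilate c \<alpha> \<gamma> u \<in> borel_measurable borel"
  unfolding dilate_def using measurable_compose[OF measurable_scale_pair, of u borel \<alpha> \<gamma>]
  by (intro borel_measurable_times borel_measurable_const) auto

lemma L2fun_dilate:
  assumes "\<alpha> > 0" "\<gamma> > 0" and u: "L2fun u"
  shows "L2fun (dilate c \<alpha> \<gamma> u)" and "L2sq (dilate c \<alpha> \<gamma> u) = c\<^sup>2 / (\<alpha> * \<gamma>) * L2sq u"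
proof -
  have [measurable]: "u \<in> borel_measurable borel" using u by (simp add: L2fun_def)
  have f[measurable]: "(\<lambda>z. c\<^sup>2 * (u z)\<^sup>2) \<in> borel_measurable borel" by simp
  have e: "(\<lambda>z. (dilate c \<alpha> \<gamma> u z)\<^sup>2) = (\<lambda>z. (\<lambda>z. c\<^sup>2 * (u z)\<^sup>2) (\<alpha> * fst z, \<gamma> * snd z))"
    by (simp add: dilate_def power_mult_distrib)
  have "integrable lborel (\<lambda>z. c\<^sup>2 * (u z)\<^sup>2)" using u by (simp add: L2fun_def)
  thus "L2fun (dilate c \<alpha> \<gamma> u)"
    unfolding L2fun_def e lborel_integral_scale_pair(2)[OF assms(1,2) f] by simp
  show "L2sq (dilate c \<alpha> \<gamma> u) = c\<^sup>2 / (\<alpha> * \<gamma>) * L2sq u"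
    unfolding L2sq_def e lborel_integral_scale_pair(1)[OF assms(1,2) f] by simp
qed

lemma test_x_inverse_scale:
  assumes \<alpha>: "\<alpha> > 0" and \<gamma>: "\<gamma> > 0" and t: "test_x \<phi> \<phi>x"
  shows "test_x (\<lambda>z. \<phi> (fst z / \<alpha>, snd z / \<gamma>)) (\<lambda>z. \<phi>x (fst z / \<alpha>, snd z / \<gamma>) / \<alpha>)"
  unfolding test_x_def
proof (intro conjI allI)
  have c1: "continuous_on UNIV \<phi>" and c2: "continuous_on UNIV \<phi>x"
    and b: "bounded {z. \<phi> z \<noteq> 0}"
    and d: "\<And>x y. ((\<lambda>t. \<phi> (t, y)) has_real_derivative \<phi>x (x, y)) (at x)"
    using t by (auto simp: test_x_def)
  have L: "continuous_on UNIV (\<lambda>z::real \<times> real. (fst z / \<alpha>, snd z / \<gamma>))"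
    by (intro continuous_intros) (use \<alpha> \<gamma> in auto)
  show "continuous_on UNIV (\<lambda>z. \<phi> (fst z / \<alpha>, snd z / \<gamma>))"
    using continuous_on_compose2[OF c1 L] by auto
  show "continuous_on UNIV (\<lambda>z. \<phi>x (fst z / \<alpha>, snd z / \<gamma>) / \<alpha>)"
    using continuous_on_compose2[OF c2 L]
      continuous_on_divide[OF _ continuous_on_const, of UNIV "\<lambda>x. \<phi>x (fst x / \<alpha>, snd x / \<gamma>)" \<alpha>] \<alpha>
    by auto
  have "{z. \<phi> (fst z / \<alpha>, snd z / \<gamma>) \<noteq> 0} = (\<lambda>z. (\<alpha> * fst z, \<gamma> * snd z)) ` {z. \<phi> z \<noteq> 0}"
  proof (rule set_eqI, rule iffI)
    fix z :: "real \<times> real"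
    assume "z \<in> {z. \<phi> (fst z / \<alpha>, snd z / \<gamma>) \<noteq> 0}"
    thus "z \<in> (\<lambda>z. (\<alpha> * fst z, \<gamma> * snd z)) ` {z. \<phi> z \<noteq> 0}"
      using \<alpha> \<gamma> by (intro image_eqI[of _ _ "(fst z / \<alpha>, snd z / \<gamma>)"]) auto
  qed (use \<alpha> \<gamma> in auto)
  moreover have "bounded_linear (\<lambda>z::real \<times> real. (\<alpha> * fst z, \<gamma> * snd z))"
    by (intro bounded_linear_Pair bounded_linear_compose[OF bounded_linear_mult_right]
        bounded_linear_fst bounded_linear_snd)
  ultimately show "bounded {z. \<phi> (fst z / \<alpha>, snd z / \<gamma>) \<noteq> 0}"
    using bounded_linear_image[OF b] by simp
  fix x y
  have "((\<lambda>t. t / \<alpha>) has_real_derivative 1 / \<alpha>) (at x)"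
    using \<alpha> by (auto intro!: derivative_eq_intros)
  from DERIV_chain2[OF d this]
  show "((\<lambda>t. \<phi> (fst (t, y) / \<alpha>, snd (t, y) / \<gamma>)) has_real_derivative
          \<phi>x (fst (x, y) / \<alpha>, snd (x, y) / \<gamma>) / \<alpha>) (at x)"
    by simp
qed

lemma weak_dx_dilate:
  assumes \<alpha>: "\<alpha> > 0" and \<gamma>: "\<gamma> > 0" and w: "weak_dx u g"
    and [measurable]: "u \<in> borel_measurable borel"
  shows "weak_dx (dilate c \<alpha> \<gamma> u) (dilate (c * \<alpha>) \<alpha> \<gamma> g)"
  unfolding weak_dx_def
proof (intro conjI allI impI)
  have gL: "L2fun g" using w by (simp add: weak_dx_def)
  have [measurable]: "g \<in> borel_measurable borel" using gL by (simp add: L2fun_def)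
  show "L2fun (dilate (c * \<alpha>) \<alpha> \<gamma> g)" by (rule L2fun_dilate(1)[OF \<alpha> \<gamma> gL])
  fix \<phi> \<phi>x assume t: "test_x \<phi> \<phi>x"
  define \<psi> where "\<psi> = (\<lambda>z. \<phi> (fst z / \<alpha>, snd z / \<gamma>))"
  define \<psi>x where "\<psi>x = (\<lambda>z. \<phi>x (fst z / \<alpha>, snd z / \<gamma>) / \<alpha>)"
  have tp: "test_x \<psi> \<psi>x" unfolding \<psi>_def \<psi>x_def by (rule test_x_inverse_scale[OF \<alpha> \<gamma> t])
  have [measurable]: "\<psi> \<in> borel_measurable borel" "\<psi>x \<in> borel_measurable borel"
    using tp by (auto simp: test_x_def intro: borel_measurable_continuous_onI)
  have w\<psi>: "integrable lborel (\<lambda>z. u z * \<psi>x z)" "integrable lborel (\<lambda>z. g z * \<psi> z)"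
    "(\<integral>z. u z * \<psi>x z \<partial>lborel) = - (\<integral>z. g z * \<psi> z \<partial>lborel)"
    using w tp unfolding weak_dx_def by blast+
  have e1: "(\<lambda>z. dilate c \<alpha> \<gamma> u z * \<phi>x z) = (\<lambda>z. (\<lambda>z. c * \<alpha> * (u z * \<psi>x z)) (\<alpha> * fst z, \<gamma> * snd z))"
    using \<alpha> \<gamma> by (auto simp: dilate_def \<psi>x_def)
  have e2: "(\<lambda>z. dilate (c * \<alpha>) \<alpha> \<gamma> g z * \<phi> z) = (\<lambda>z. (\<lambda>z. c * \<alpha> * (g z * \<psi> z)) (\<alpha> * fst z, \<gamma> * snd z))"
    using \<alpha> \<gamma> by (auto simp: dilate_def \<psi>_def)
  have m1[measurable]: "(\<lambda>z. c * \<alpha> * (u z * \<psi>x z)) \<in> borel_measurable borel"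
   and m2[measurable]: "(\<lambda>z. c * \<alpha> * (g z * \<psi> z)) \<in> borel_measurable borel" by simp_all
  show "integrable lborel (\<lambda>z. dilate c \<alpha> \<gamma> u z * \<phi>x z)"
    unfolding e1 lborel_integral_scale_pair(2)[OF \<alpha> \<gamma> m1] using w\<psi>(1) by simp
  show "integrable lborel (\<lambda>z. dilate (c * \<alpha>) \<alpha> \<gamma> g z * \<phi> z)"
    unfolding e2 lborel_integral_scale_pair(2)[OF \<alpha> \<gamma> m2] using w\<psi>(2) by simp
  show "(\<integral>z. dilate c \<alpha> \<gamma> u z * \<phi>x z \<partial>lborel) = - (\<integral>z. dilate (c * \<alpha>) \<alpha> \<gamma> g z * \<phi> z \<partial>lborel)"
    unfolding e1 e2 lborel_integral_scale_pair(1)[OF \<alpha> \<gamma> m1] lborel_integral_scale_pair(1)[OF \<alpha> \<gamma> m2]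
    using w\<psi>(3) by simp
qed

lemma gag_dilate:
  assumes \<gamma>: "\<gamma> > 0"
  shows "gag s (dilate c \<alpha> \<gamma> u) (dilate c \<alpha> \<gamma> u) t
           = c\<^sup>2 * \<gamma> powr (1 + 2 * s) * gag s u u (\<alpha> * fst t, \<gamma> * fst (snd t), \<gamma> * snd (snd t))"
proof -
  obtain x y y' where t: "t = (x, y, y')" by (cases t) auto
  let ?d = "u (\<alpha> * x, \<gamma> * y) - u (\<alpha> * x, \<gamma> * y')"
  have "\<bar>\<gamma> * y - \<gamma> * y'\<bar> powr (1 + 2 * s) = \<gamma> powr (1 + 2 * s) * \<bar>y - y'\<bar> powr (1 + 2 * s)"
    using \<gamma> by (simp add: right_diff_distrib[symmetric] abs_mult powr_mult)
  hence r: "gag s u u (\<alpha> * fst t, \<gamma> * fst (snd t), \<gamma> * snd (snd t))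
      = ?d * ?d / (\<gamma> powr (1 + 2 * s) * \<bar>y - y'\<bar> powr (1 + 2 * s))"
    unfolding t gag_def by simp
  have l: "gag s (dilate c \<alpha> \<gamma> u) (dilate c \<alpha> \<gamma> u) t = (c * ?d) * (c * ?d) / \<bar>y - y'\<bar> powr (1 + 2 * s)"
    unfolding t gag_def dilate_def by (simp add: right_diff_distrib)
  have "\<gamma> powr (1 + 2 * s) > 0" using \<gamma> by simp
  thus ?thesis unfolding r l
    by (cases "\<bar>y - y'\<bar> powr (1 + 2 * s) = 0") (simp_all add: power2_eq_square field_simps)
qed

lemma gag_dilate_integral:
  assumes \<alpha>: "\<alpha> > 0" and \<gamma>: "\<gamma> > 0" and u: "u \<in> H1s s"
  shows "gag s (dilate c \<alpha> \<gamma> u) (dilate c \<alpha> \<gamma> u) \<in> borel_measurable borel"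
    and "integrable lborel (gag s (dilate c \<alpha> \<gamma> u) (dilate c \<alpha> \<gamma> u))"
    and "Efrac s (dilate c \<alpha> \<gamma> u) (dilate c \<alpha> \<gamma> u) = c\<^sup>2 * \<gamma> powr (1 + 2 * s) / (\<alpha> * \<gamma> * \<gamma>) * Efrac s u u"
proof -
  have [measurable]: "gag s u u \<in> borel_measurable borel" using u by (simp add: H1s_def)
  define K where "K = c\<^sup>2 * \<gamma> powr (1 + 2 * s)"
  have fm[measurable]: "(\<lambda>z. K * gag s u u z) \<in> borel_measurable borel" by simp
  have e: "gag s (dilate c \<alpha> \<gamma> u) (dilate c \<alpha> \<gamma> u)
      = (\<lambda>t. (\<lambda>z. K * gag s u u z) (\<alpha> * fst t, \<gamma> * fst (snd t), \<gamma> * snd (snd t)))"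
    using gag_dilate[OF \<gamma>] unfolding K_def by (intro ext) simp
  show "gag s (dilate c \<alpha> \<gamma> u) (dilate c \<alpha> \<gamma> u) \<in> borel_measurable borel"
    unfolding e by measurable
  show "integrable lborel (gag s (dilate c \<alpha> \<gamma> u) (dilate c \<alpha> \<gamma> u))"
    unfolding e lborel_integral_scale_triple(2)[OF \<alpha> \<gamma> fm] using u by (simp add: H1s_def)
  show "Efrac s (dilate c \<alpha> \<gamma> u) (dilate c \<alpha> \<gamma> u) = c\<^sup>2 * \<gamma> powr (1 + 2 * s) / (\<alpha> * \<gamma> * \<gamma>) * Efrac s u u"
  proof -
    have "integral\<^sup>L lborel (gag s (dilate c \<alpha> \<gamma> u) (dilate c \<alpha> \<gamma> u))
        = integral\<^sup>L lborel (\<lambda>z. K * gag s u u z) / (\<alpha> * \<gamma> * \<gamma>)"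
      unfolding e by (rule lborel_integral_scale_triple(1)[OF \<alpha> \<gamma> fm])
    thus ?thesis unfolding Efrac_def K_def by (simp add: ac_simps)
  qed
qed

lemma weak_dx_dx: "\<exists>g. weak_dx u g \<Longrightarrow> weak_dx u (dx u)"
  unfolding dx_def by (metis someI_ex)

lemma H1s_dilate:
  assumes \<alpha>: "\<alpha> > 0" and \<gamma>: "\<gamma> > 0" and u: "u \<in> H1s s"
  shows "dilate c \<alpha> \<gamma> u \<in> H1s s"
    and "(\<integral>z. (dx (dilate c \<alpha> \<gamma> u) z)\<^sup>2 \<partial>lborel) = c\<^sup>2 * \<alpha> / \<gamma> * (\<integral>z. (dx u z)\<^sup>2 \<partial>lborel)"
proof -
  have uL: "L2fun u" and ex: "\<exists>g. weak_dx u g" using u by (auto simp: H1s_def)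
  have wu: "weak_dx u (dx u)" by (rule weak_dx_dx[OF ex])
  have [measurable]: "u \<in> borel_measurable borel" using uL by (simp add: L2fun_def)
  have ws: "weak_dx (dilate c \<alpha> \<gamma> u) (dilate (c * \<alpha>) \<alpha> \<gamma> (dx u))"
    by (rule weak_dx_dilate[OF \<alpha> \<gamma> wu]) simp
  show "dilate c \<alpha> \<gamma> u \<in> H1s s"
    unfolding H1s_def using L2fun_dilate(1)[OF \<alpha> \<gamma> uL] ws gag_dilate_integral(1,2)[OF \<alpha> \<gamma> u] by blast
  have wd: "weak_dx (dilate c \<alpha> \<gamma> u) (dx (dilate c \<alpha> \<gamma> u))" using ws by (blast intro: weak_dx_dx)
  have dxL: "L2fun (dx u)" "L2fun (dx (dilate c \<alpha> \<gamma> u))" using wu wd by (simp_all add: weak_dx_def)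
  have "(\<integral>z. (dx (dilate c \<alpha> \<gamma> u) z)\<^sup>2 \<partial>lborel) = L2sq (dilate (c * \<alpha>) \<alpha> \<gamma> (dx u))"
    unfolding L2sq_def using weak_dx_unique[OF wd ws] dxL L2fun_dilate(1)[OF \<alpha> \<gamma> dxL(1)]
    by (intro integral_cong_AE) (auto simp: L2fun_def)
  also have "\<dots> = c\<^sup>2 * \<alpha> / \<gamma> * (\<integral>z. (dx u z)\<^sup>2 \<partial>lborel)"
    using L2fun_dilate(2)[where c="c * \<alpha>", OF \<alpha> \<gamma> dxL(1)] \<alpha> \<gamma> by (simp add: L2sq_def power2_eq_square field_simps)
  finally show "(\<integral>z. (dx (dilate c \<alpha> \<gamma> u) z)\<^sup>2 \<partial>lborel) = c\<^sup>2 * \<alpha> / \<gamma> * (\<integral>z. (dx u z)\<^sup>2 \<partial>lborel)" .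
qed

lemma Lpp_dilate:
  assumes "\<alpha> > 0" "\<gamma> > 0" "c > 0" and [measurable]: "u \<in> borel_measurable borel"
  shows "Lpp p (dilate c \<alpha> \<gamma> u) = c powr p / (\<alpha> * \<gamma>) * Lpp p u"
proof -
  have fm[measurable]: "(\<lambda>z. c powr p * \<bar>u z\<bar> powr p) \<in> borel_measurable borel" by measurable
  have e: "(\<lambda>z. \<bar>dilate c \<alpha> \<gamma> u z\<bar> powr p) = (\<lambda>z. (\<lambda>z. c powr p * \<bar>u z\<bar> powr p) (\<alpha> * fst z, \<gamma> * snd z))"
    using assms by (auto simp: dilate_def abs_mult powr_mult)
  show ?thesis unfolding Lpp_def e lborel_integral_scale_pair(1)[OF assms(1,2) fm] by simp
qed

lemma coup_dilate:
  assumes "\<alpha> > 0" "\<gamma> > 0" "c1 > 0" "c2 > 0"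
    and [measurable]: "u \<in> borel_measurable borel" "v \<in> borel_measurable borel"
  shows "coup r1 r2 (dilate c1 \<alpha> \<gamma> u) (dilate c2 \<alpha> \<gamma> v)
           = c1 powr r1 * c2 powr r2 / (\<alpha> * \<gamma>) * coup r1 r2 u v"
proof -
  have fm[measurable]: "(\<lambda>z. c1 powr r1 * c2 powr r2 * (\<bar>u z\<bar> powr r1 * \<bar>v z\<bar> powr r2)) \<in> borel_measurable borel"
    by measurable
  have e: "(\<lambda>z. \<bar>dilate c1 \<alpha> \<gamma> u z\<bar> powr r1 * \<bar>dilate c2 \<alpha> \<gamma> v z\<bar> powr r2) =
      (\<lambda>z. (\<lambda>z. c1 powr r1 * c2 powr r2 * (\<bar>u z\<bar> powr r1 * \<bar>v z\<bar> powr r2)) (\<alpha> * fst z, \<gamma> * snd z))"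
    using assms by (auto simp: dilate_def abs_mult powr_mult)
  show ?thesis unfolding coup_def e lborel_integral_scale_pair(1)[OF assms(1,2) fm] by simp
qed

section \<open>The fibre scaling\<close>

definition fibre_scale :: "real \<Rightarrow> real \<Rightarrow> real \<Rightarrow> (real \<times> real \<Rightarrow> real) \<Rightarrow> real \<times> real \<Rightarrow> real" where
  "fibre_scale s t \<sigma> u = dilate (t * \<sigma> powr ((1 + s) / 2)) (\<sigma> powr s) \<sigma> u"

lemma H1s_fibre_scale:
  "u \<in> H1s s \<Longrightarrow> \<sigma> > 0 \<Longrightarrow> fibre_scale s t \<sigma> u \<in> H1s s"
  unfolding fibre_scale_def by (rule H1s_dilate(1)) auto

lemma fibre_scale_amplitude_sq:
  fixes \<sigma> s t :: real
  assumes "\<sigma> > 0"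
  shows "(t * \<sigma> powr ((1 + s) / 2))\<^sup>2 = t\<^sup>2 * (\<sigma> powr s * \<sigma>)"
proof -
  have "(\<sigma> powr ((1 + s) / 2))\<^sup>2 = \<sigma> powr (1 + s)"
    by (simp add: power2_eq_square flip: powr_add)
  also have "\<dots> = \<sigma> powr s * \<sigma>" using assms by (simp add: powr_add)
  finally show ?thesis by (simp add: power_mult_distrib)
qed

lemma L2sq_fibre_scale:
  assumes "u \<in> H1s s" "\<sigma> > 0"
  shows "L2sq (fibre_scale s t \<sigma> u) = t\<^sup>2 * L2sq u"
  using L2fun_dilate(2)[of "\<sigma> powr s" \<sigma> u] assms fibre_scale_amplitude_sq[OF assms(2)]
  by (simp add: fibre_scale_def H1s_def)

lemma Kfun_fibre_scale:
  assumes u: "u \<in> H1s s" and \<sigma>: "\<sigma> > 0"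
  shows "Kfun s (fibre_scale s t \<sigma> u) = t\<^sup>2 * \<sigma> powr (2 * s) * Kfun s u"
proof -
  have \<alpha>: "\<sigma> powr s > 0" using \<sigma> by simp
  have ss: "\<sigma> powr (2 * s) = \<sigma> powr s * \<sigma> powr s" by (simp add: powr_add[symmetric])
  have "\<sigma> powr (1 + 2 * s) = \<sigma> * (\<sigma> powr s * \<sigma> powr s)" using \<sigma> by (simp add: powr_add ss)
  thus ?thesis
    unfolding Kfun_def fibre_scale_def H1s_dilate(2)[OF \<alpha> \<sigma> u] gag_dilate_integral(3)[OF \<alpha> \<sigma> u]
      fibre_scale_amplitude_sq[OF \<sigma>] ss
    using \<sigma> by (simp add: field_simps)
qed

lemma powr_fibre_exponent:
  fixes \<sigma> s m :: real
  assumes "\<sigma> > 0"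
  shows "\<sigma> powr ((1 + s) / 2 * m) / (\<sigma> powr s * \<sigma>) = \<sigma> powr ((1 + s) * (m - 2) / 2)"
proof -
  have "\<sigma> powr ((1 + s) / 2 * m) / (\<sigma> powr s * \<sigma>) = \<sigma> powr ((1 + s) / 2 * m - s - 1)"
    using assms by (simp add: powr_diff powr_add[symmetric])
  also have "(1 + s) / 2 * m - s - 1 = (1 + s) * (m - 2) / 2" by (simp add: field_simps)
  finally show ?thesis .
qed

lemma Lpp_fibre_scale:
  assumes u: "u \<in> H1s s" and t: "t > 0" and \<sigma>: "\<sigma> > 0"
  shows "Lpp p (fibre_scale s t \<sigma> u) = t powr p * \<sigma> powr ((1 + s) * (p - 2) / 2) * Lpp p u"
proof -
  have "u \<in> borel_measurable borel" using u by (simp add: H1s_def L2fun_def)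
  hence "Lpp p (fibre_scale s t \<sigma> u) = (t * \<sigma> powr ((1 + s) / 2)) powr p / (\<sigma> powr s * \<sigma>) * Lpp p u"
    unfolding fibre_scale_def using t \<sigma> by (intro Lpp_dilate) auto
  also have "(t * \<sigma> powr ((1 + s) / 2)) powr p / (\<sigma> powr s * \<sigma>)
      = t powr p * (\<sigma> powr ((1 + s) / 2 * p) / (\<sigma> powr s * \<sigma>))"
    using t \<sigma> by (simp add: powr_mult powr_powr)
  finally show ?thesis unfolding powr_fibre_exponent[OF \<sigma>] .
qed

lemma coup_fibre_scale:
  assumes u: "u \<in> H1s s" and v: "v \<in> H1s s" and t1: "t1 > 0" and t2: "t2 > 0" and \<sigma>: "\<sigma> > 0"
  shows "coup r1 r2 (fibre_scale s t1 \<sigma> u) (fibre_scale s t2 \<sigma> v)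
           = t1 powr r1 * t2 powr r2 * \<sigma> powr ((1 + s) * (r1 + r2 - 2) / 2) * coup r1 r2 u v"
proof -
  have "u \<in> borel_measurable borel" "v \<in> borel_measurable borel"
    using u v by (auto simp: H1s_def L2fun_def)
  hence "coup r1 r2 (fibre_scale s t1 \<sigma> u) (fibre_scale s t2 \<sigma> v)
      = (t1 * \<sigma> powr ((1 + s) / 2)) powr r1 * (t2 * \<sigma> powr ((1 + s) / 2)) powr r2 / (\<sigma> powr s * \<sigma>)
        * coup r1 r2 u v"
    unfolding fibre_scale_def using t1 t2 \<sigma> by (intro coup_dilate) auto
  also have "(t1 * \<sigma> powr ((1 + s) / 2)) powr r1 * (t2 * \<sigma> powr ((1 + s) / 2)) powr r2 / (\<sigma> powr s * \<sigma>)
      = t1 powr r1 * t2 powr r2 * (\<sigma> powr ((1 + s) / 2 * (r1 + r2)) / (\<sigma> powr s * \<sigma>))"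
    using t1 t2 \<sigma> by (simp add: powr_mult powr_powr distrib_left powr_add)
  finally show ?thesis unfolding powr_fibre_exponent[OF \<sigma>] .
qed

section \<open>Descent along the fibres\<close>

lemma powr_ge_tangent_at_one:
  fixes x m :: real
  assumes "x > 0" "m \<ge> 1"
  shows "1 + m * (x - 1) \<le> x powr m"
proof -
  have "((\<lambda>x. x powr m) has_real_derivative m * 1 powr (m - 1)) (at 1 within {0<..})"
    by (auto intro!: derivative_eq_intros)
  hence "m * (x - 1) \<le> x powr m - 1 powr m"
    using convex_on_imp_above_tangent[OF powr_convex[OF assms(2)], of 1 x m] assms
    by (simp add: interior_open)
  thus ?thesis by simp
qed

lemma weighted_sum_pos:
  fixes a1 a2 a3 d1 d2 d3 :: real
  assumes "0 \<le> a1" "0 \<le> a2" "0 \<le> a3" "0 < a1 + a2 + a3" "0 < d1" "0 < d2" "0 < d3"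
  shows "0 < a1 * d1 + a2 * d2 + a3 * d3"
  using assms mult_pos_pos[of a1 d1] mult_pos_pos[of a2 d2] mult_pos_pos[of a3 d3]
    mult_nonneg_nonneg[of a1 d1] mult_nonneg_nonneg[of a2 d2] mult_nonneg_nonneg[of a3 d3]
  by (smt (verit))

text \<open>\<open>F\<close> and \<open>G\<close> are \<open>J\<close> and \<open>P\<close> evaluated at \<open>(fibre_scale s t \<sigma> u, fibre_scale s 1 \<sigma> v)\<close>,
  with \<open>k\<^sub>i\<close> the kinetic energies, \<open>c\<^sub>i\<close> the weighted nonlinear terms and \<open>e\<^sub>i\<close> their
  \<open>\<sigma>\<close>-exponents. The assumption \<open>on_manifold\<close> says \<open>G 1 1 = 0\<close>, and \<open>slope_neg\<close> says
  \<open>\<partial>\<^sub>t F (1, 1) < 0\<close>.\<close>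

locale pohozaev_fibre =
  fixes s p r k1 k2 c1 c2 c3 e1 e2 e3 :: real
  assumes s_pos: "0 < s"
    and exponents_gt: "2 * s < e1" "2 * s < e2" "2 * s < e3"
    and coeffs_nonneg: "0 \<le> k1" "0 \<le> k2" "0 \<le> c1" "0 \<le> c2" "0 \<le> c3"
    and on_manifold: "s * (k1 + k2) = e1 * c1 + e2 * c2 + e3 * c3"
    and slope_neg: "k1 < p * c1 + r * c3"
begin

definition F :: "real \<Rightarrow> real \<Rightarrow> real" where
  "F t \<sigma> = \<sigma> powr (2 * s) * (t\<^sup>2 * k1 + k2) / 2
     - c1 * t powr p * \<sigma> powr e1 - c2 * \<sigma> powr e2 - c3 * t powr r * \<sigma> powr e3"

definition G :: "real \<Rightarrow> real \<Rightarrow> real" where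
  "G t \<sigma> = s * \<sigma> powr (2 * s) * (t\<^sup>2 * k1 + k2)
     - e1 * c1 * t powr p * \<sigma> powr e1 - e2 * c2 * \<sigma> powr e2 - e3 * c3 * t powr r * \<sigma> powr e3"

definition dF :: "real \<Rightarrow> real \<Rightarrow> real" where
  "dF t \<sigma> = t * \<sigma> powr (2 * s) * k1 - c1 * p * t powr (p - 1) * \<sigma> powr e1
     - c3 * r * t powr (r - 1) * \<sigma> powr e3"

lemma G_one:
  "G 1 \<sigma> = e1 * c1 * (\<sigma> powr (2 * s) - \<sigma> powr e1) + e2 * c2 * (\<sigma> powr (2 * s) - \<sigma> powr e2)
     + e3 * c3 * (\<sigma> powr (2 * s) - \<sigma> powr e3)"
proof -
  have "G 1 \<sigma> = \<sigma> powr (2 * s) * (s * (k1 + k2))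
      - e1 * c1 * \<sigma> powr e1 - e2 * c2 * \<sigma> powr e2 - e3 * c3 * \<sigma> powr e3"
    unfolding G_def by (simp add: algebra_simps)
  thus ?thesis unfolding on_manifold by (simp add: algebra_simps)
qed

lemma G_one_sign:
  assumes "0 < \<sigma>"
  shows "\<sigma> < 1 \<Longrightarrow> 0 < G 1 \<sigma>" and "1 < \<sigma> \<Longrightarrow> G 1 \<sigma> < 0"
proof -
  have a: "0 \<le> e1 * c1" "0 \<le> e2 * c2" "0 \<le> e3 * c3"
    using s_pos exponents_gt coeffs_nonneg by auto
  have "0 < e1 * c1 + e2 * c2 + e3 * c3"
  proof (rule ccontr)
    assume "\<not> ?thesis"
    hence "e1 * c1 = 0" "e3 * c3 = 0" using a by linarith+
    hence "c1 = 0" "c3 = 0" using s_pos exponents_gt by auto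
    thus False using slope_neg coeffs_nonneg by simp
  qed
  note pos = weighted_sum_pos[OF a this]
  show "\<sigma> < 1 \<Longrightarrow> 0 < G 1 \<sigma>"
    unfolding G_one using assms exponents_gt by (intro pos) (auto intro: powr_less_mono')
  show "1 < \<sigma> \<Longrightarrow> G 1 \<sigma> < 0"
    using pos[of "\<sigma> powr e1 - \<sigma> powr (2 * s)" "\<sigma> powr e2 - \<sigma> powr (2 * s)"
        "\<sigma> powr e3 - \<sigma> powr (2 * s)"] exponents_gt
    unfolding G_one by (auto intro: powr_less_mono simp: algebra_simps)
qed

text \<open>In the variable \<open>x = \<sigma>\<^bsup>2s\<^esup>\<close> each nonlinear term lies above its tangent at \<open>x = 1\<close>,
  and by \<open>on_manifold\<close> the tangents add up to the kinetic term.\<close>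

lemma F_one_le: "0 < \<sigma> \<Longrightarrow> F 1 \<sigma> \<le> F 1 1"
proof -
  assume \<sigma>: "0 < \<sigma>"
  define x where "x = \<sigma> powr (2 * s)"
  have x: "x > 0" using \<sigma> by (simp add: x_def)
  define m1 m2 m3 where "m1 = e1 / (2 * s)" and "m2 = e2 / (2 * s)" and "m3 = e3 / (2 * s)"
  have m: "m1 \<ge> 1" "m2 \<ge> 1" "m3 \<ge> 1"
    using exponents_gt s_pos by (auto simp: m1_def m2_def m3_def field_simps)
  have xp: "\<sigma> powr e1 = x powr m1" "\<sigma> powr e2 = x powr m2" "\<sigma> powr e3 = x powr m3"
    using s_pos by (auto simp: x_def m1_def m2_def m3_def powr_powr)
  have K: "(k1 + k2) / 2 = c1 * m1 + c2 * m2 + c3 * m3"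
    using on_manifold s_pos unfolding m1_def m2_def m3_def by (simp add: field_simps)
  have "c1 * (1 + m1 * (x - 1)) \<le> c1 * x powr m1" "c2 * (1 + m2 * (x - 1)) \<le> c2 * x powr m2"
    "c3 * (1 + m3 * (x - 1)) \<le> c3 * x powr m3"
    using powr_ge_tangent_at_one[OF x] m coeffs_nonneg by (auto intro: mult_left_mono)
  moreover have "F 1 1 - F 1 \<sigma> = (c1 * x powr m1 - c1 * (1 + m1 * (x - 1)))
      + (c2 * x powr m2 - c2 * (1 + m2 * (x - 1))) + (c3 * x powr m3 - c3 * (1 + m3 * (x - 1)))"
  proof -
    have "F 1 \<sigma> = x * ((k1 + k2) / 2) - c1 * x powr m1 - c2 * x powr m2 - c3 * x powr m3"
      unfolding F_def xp by (simp add: x_def)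
    moreover have "F 1 1 = (k1 + k2) / 2 - c1 - c2 - c3" unfolding F_def by simp
    ultimately show ?thesis unfolding K by (simp add: algebra_simps)
  qed
  ultimately show ?thesis by linarith
qed

lemma F_has_real_derivative:
  "0 < t \<Longrightarrow> ((\<lambda>t. F t \<sigma>) has_real_derivative dF t \<sigma>) (at t)"
  unfolding F_def[abs_def] dF_def
  by (auto intro!: derivative_eq_intros simp: field_simps power2_eq_square)

lemma F_decreasing_near_one:
  "\<exists>d>0. \<forall>t \<sigma>. 1 < t \<longrightarrow> t < 1 + d \<longrightarrow> \<bar>\<sigma> - 1\<bar> \<le> d \<longrightarrow> F t \<sigma> < F 1 \<sigma>"
proof -
  have "dF 1 1 < 0" unfolding dF_def using slope_neg by (simp add: mult.commute)
  moreover have "((\<lambda>z. dF (fst z) (snd z)) \<longlongrightarrow> dF (fst (1::real, 1::real)) (snd (1::real, 1::real))) (at (1, 1))"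
    unfolding dF_def by (intro tendsto_intros) auto
  ultimately have "\<forall>\<^sub>F z in at (1::real, 1::real). dF (fst z) (snd z) < 0"
    by (intro order_tendstoD(2)) auto
  then obtain d0 where d0: "d0 > 0"
    and neg: "\<And>z. z \<noteq> (1, 1) \<Longrightarrow> dist z (1, 1) < d0 \<Longrightarrow> dF (fst z) (snd z) < 0"
    unfolding eventually_at by blast
  have dF_neg: "dF t \<sigma> < 0" if "\<bar>t - 1\<bar> < d0 / 2" "\<bar>\<sigma> - 1\<bar> < d0 / 2" for t \<sigma>
  proof (cases "(t, \<sigma>) = (1, 1)")
    case False
    have "dist (t, \<sigma>) (1, 1) \<le> \<bar>dist t 1\<bar> + \<bar>dist \<sigma> 1\<bar>"
      unfolding dist_Pair_Pair by (rule sqrt_sum_squares_le_sum_abs)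
    also have "\<dots> < d0" using that by (simp add: dist_real_def)
    finally show ?thesis using neg[OF False] by simp
  qed (use \<open>dF 1 1 < 0\<close> in simp)
  have "F t \<sigma> < F 1 \<sigma>" if t: "1 < t" "t < 1 + d0 / 4" and \<sigma>: "\<bar>\<sigma> - 1\<bar> \<le> d0 / 4" for t \<sigma>
  proof -
    obtain z where z: "1 < z" "z < t" "F t \<sigma> - F 1 \<sigma> = (t - 1) * dF z \<sigma>"
      using MVT2[OF t(1), of "\<lambda>x. F x \<sigma>" "\<lambda>x. dF x \<sigma>"] F_has_real_derivative by force
    have "dF z \<sigma> < 0" using z t \<sigma> d0 by (intro dF_neg) auto
    hence "(t - 1) * dF z \<sigma> < 0" using t by (intro mult_pos_neg) auto
    thus ?thesis using z by linarith
  qed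
  thus ?thesis using d0 by (intro exI[of _ "d0 / 4"]) auto
qed

lemma G_root_near_one:
  assumes "0 < d" "d < 1"
  shows "\<exists>d'>0. \<forall>t. \<bar>t - 1\<bar> < d' \<longrightarrow> (\<exists>\<sigma>. \<bar>\<sigma> - 1\<bar> \<le> d \<and> G t \<sigma> = 0)"
proof -
  have "((\<lambda>t. G t (1 - d)) \<longlongrightarrow> G 1 (1 - d)) (at 1)" "((\<lambda>t. G t (1 + d)) \<longlongrightarrow> G 1 (1 + d)) (at 1)"
    unfolding G_def by (intro tendsto_intros; use assms in auto)+
  moreover have "0 < G 1 (1 - d)" "G 1 (1 + d) < 0" using assms by (intro G_one_sign; simp)+
  ultimately have "\<forall>\<^sub>F t in at 1. 0 < G t (1 - d)" "\<forall>\<^sub>F t in at 1. G t (1 + d) < 0"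
    by (auto intro: order_tendstoD)
  hence "\<forall>\<^sub>F t in at (1::real). 0 < G t (1 - d) \<and> G t (1 + d) < 0"
    by eventually_elim auto
  then obtain d' where d': "d' > 0"
    and signs: "\<And>t. t \<noteq> 1 \<Longrightarrow> dist t 1 < d' \<Longrightarrow> 0 < G t (1 - d) \<and> G t (1 + d) < 0"
    unfolding eventually_at by blast
  have "\<exists>\<sigma>. \<bar>\<sigma> - 1\<bar> \<le> d \<and> G t \<sigma> = 0" if t: "\<bar>t - 1\<bar> < d'" for t
  proof -
    have "0 < G t (1 - d) \<and> G t (1 + d) < 0"
      using signs[of t] t \<open>0 < G 1 (1 - d)\<close> \<open>G 1 (1 + d) < 0\<close>
      by (cases "t = 1") (auto simp: dist_real_def)
    moreover have "continuous_on {1 - d .. 1 + d} (G t)"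
      unfolding G_def[abs_def] using assms by (intro continuous_intros) auto
    ultimately obtain \<sigma> where "1 - d \<le> \<sigma>" "\<sigma> \<le> 1 + d" "G t \<sigma> = 0"
      using IVT2'[of "G t" "1 + d" 0 "1 - d"] assms by auto
    thus ?thesis by (intro exI[of _ \<sigma>]) auto
  qed
  thus ?thesis using d' by blast
qed

lemma exists_descent:
  assumes "0 < \<epsilon>"
  shows "\<exists>t \<sigma>. 1 < t \<and> t < 1 + \<epsilon> \<and> 0 < \<sigma> \<and> G t \<sigma> = 0 \<and> F t \<sigma> < F 1 1"
proof -
  obtain d where d: "d > 0" and decr: "\<And>t \<sigma>. 1 < t \<Longrightarrow> t < 1 + d \<Longrightarrow> \<bar>\<sigma> - 1\<bar> \<le> d \<Longrightarrow> F t \<sigma> < F 1 \<sigma>"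
    using F_decreasing_near_one by blast
  define d0 where "d0 = min d (1/2)"
  have d0: "0 < d0" "d0 < 1" using d by (auto simp: d0_def)
  obtain d' where d': "d' > 0" and root: "\<And>t. \<bar>t - 1\<bar> < d' \<Longrightarrow> \<exists>\<sigma>. \<bar>\<sigma> - 1\<bar> \<le> d0 \<and> G t \<sigma> = 0"
    using G_root_near_one[OF d0] by blast
  define t where "t = 1 + min \<epsilon> (min d d') / 2"
  have t: "1 < t" "t < 1 + \<epsilon>" "t < 1 + d" "\<bar>t - 1\<bar> < d'" using assms d d' by (auto simp: t_def)
  then obtain \<sigma> where \<sigma>: "\<bar>\<sigma> - 1\<bar> \<le> d0" "G t \<sigma> = 0" using root by blast
  have "\<bar>\<sigma> - 1\<bar> \<le> 1/2" using \<sigma>(1) by (simp add: d0_def)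
  hence "0 < \<sigma>" by linarith
  have "F t \<sigma> < F 1 \<sigma>" using \<sigma>(1) t by (intro decr) (auto simp: d0_def)
  also have "\<dots> \<le> F 1 1" using \<open>0 < \<sigma>\<close> by (rule F_one_le)
  finally show ?thesis using t \<sigma> \<open>0 < \<sigma>\<close> by blast
qed

end

section \<open>The energy functionals\<close>

lemma Cfrac_pos: "0 < s \<Longrightarrow> s < 1 \<Longrightarrow> Cfrac s > 0"
  unfolding Cfrac_def by (intro divide_pos_pos mult_pos_pos Gamma_real_pos) auto

lemma Kfun_nonneg: "0 < s \<Longrightarrow> s < 1 \<Longrightarrow> Kfun s u \<ge> 0"
proof -
  assume "0 < s" "s < 1"
  hence "Cfrac s > 0" by (rule Cfrac_pos)
  moreover have "integral\<^sup>L lborel (gag s u u) \<ge> 0"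
    by (rule Bochner_Integration.integral_nonneg) (simp add: gag_def case_prod_beta)
  moreover have "(\<integral>z. (dx u z)\<^sup>2 \<partial>lborel) \<ge> 0"
    by (rule Bochner_Integration.integral_nonneg) simp
  ultimately show ?thesis unfolding Kfun_def Efrac_def by simp
qed

lemma Lpp_nonneg: "Lpp p u \<ge> 0"
  unfolding Lpp_def by (rule Bochner_Integration.integral_nonneg) simp

lemma coup_nonneg: "coup r1 r2 u v \<ge> 0"
  unfolding coup_def by (rule Bochner_Integration.integral_nonneg) simp

lemma AE_zero_iff_L2sq_zero:
  assumes "L2fun u"
  shows "(AE z in lborel. u z = 0) \<longleftrightarrow> L2sq u = 0"
proof -
  have "integrable lborel (\<lambda>z. (u z)\<^sup>2)" using assms by (simp add: L2fun_def)
  hence "L2sq u = 0 \<longleftrightarrow> (AE z in lborel. (u z)\<^sup>2 = 0)"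
    unfolding L2sq_def by (rule integral_nonneg_eq_0_iff_AE) auto
  thus ?thesis by simp
qed

lemma exponent_gaps:
  fixes s m :: real
  assumes "0 < s" "2 * (1 + 3 * s) / (1 + s) < m"
  shows "2 * s < (1 + s) * (m - 2) / 2" and "2 < m"
proof -
  show gap: "2 * s < (1 + s) * (m - 2) / 2" using assms by (simp add: field_simps)
  show "2 < m"
  proof (rule ccontr)
    assume "\<not> 2 < m"
    hence "(1 + s) * (m - 2) \<le> 0" using assms(1) by (intro mult_nonneg_nonpos) auto
    thus False using gap assms(1) by linarith
  qed
qed

text \<open>On the Pohozaev manifold \<open>J = J - P / (2s)\<close>, which has only nonnegative terms.\<close>

lemma Jfun_nonneg_if_Pfun_zero:
  assumes s: "0 < s"
    and hpar: "mu1 > 0" "mu2 > 0" "beta > 0"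
    and hp: "2 * (1 + 3 * s) / (1 + s) < p" and hq: "2 * (1 + 3 * s) / (1 + s) < q"
    and hr: "2 * (1 + 3 * s) / (1 + s) < r1 + r2"
    and P: "Pfun s p q r1 r2 mu1 mu2 beta u v = 0"
  shows "Jfun s p q r1 r2 mu1 mu2 beta u v \<ge> 0"
proof -
  note gp = exponent_gaps[OF s hp] and gq = exponent_gaps[OF s hq] and gr = exponent_gaps[OF s hr]
  define a1 where "a1 = ((1 + s) * (p - 2) - 4 * s) / (4 * s * p)"
  define a2 where "a2 = ((1 + s) * (q - 2) - 4 * s) / (4 * s * q)"
  define a3 where "a3 = ((1 + s) * (r1 + r2 - 2) - 4 * s) / (4 * s)"
  have a: "a1 \<ge> 0" "a2 \<ge> 0" "a3 \<ge> 0"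
    using gp gq gr s by (auto simp: a1_def a2_def a3_def)
  have "Jfun s p q r1 r2 mu1 mu2 beta u v
      = Jfun s p q r1 r2 mu1 mu2 beta u v - Pfun s p q r1 r2 mu1 mu2 beta u v / (2 * s)"
    using P by simp
  also have "\<dots> = a1 * mu1 * Lpp p u + a2 * mu2 * Lpp q v + a3 * beta * coup r1 r2 u v"
    unfolding Jfun_def Pfun_def a1_def a2_def a3_def using s gp(2) gq(2) by (simp add: field_simps)
  also have "\<dots> \<ge> 0" using a hpar Lpp_nonneg[of p u] Lpp_nonneg[of q v] coup_nonneg[of r1 r2 u v]
    by (intro add_nonneg_nonneg mult_nonneg_nonneg) auto
  finally show ?thesis .
qed

lemma Cab_le_Jfun:
  assumes s: "0 < s"
    and hpar: "mu1 > 0" "mu2 > 0" "beta > 0"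
    and hp: "2 * (1 + 3 * s) / (1 + s) < p" and hq: "2 * (1 + 3 * s) / (1 + s) < q"
    and hr: "2 * (1 + 3 * s) / (1 + s) < r1 + r2"
    and w: "(w1, w2) \<in> Pset_ab s p q r1 r2 mu1 mu2 beta a b"
  shows "Cab s p q r1 r2 mu1 mu2 beta a b \<le> Jfun s p q r1 r2 mu1 mu2 beta w1 w2"
proof -
  have "bdd_below ((\<lambda>uv. Jfun s p q r1 r2 mu1 mu2 beta (fst uv) (snd uv)) ` Pset_ab s p q r1 r2 mu1 mu2 beta a b)"
    using Jfun_nonneg_if_Pfun_zero[OF s hpar hp hq hr]
    by (intro bdd_belowI[of _ 0]) (auto simp: Pset_ab_def)
  from cINF_lower[OF this w] show ?thesis by (simp add: Cab_def)
qed

lemma coup_swap: "coup r1 r2 u v = coup r2 r1 v u"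
  unfolding coup_def by (simp add: mult.commute)

lemma Jfun_swap: "Jfun s p q r1 r2 mu1 mu2 beta u v = Jfun s q p r2 r1 mu2 mu1 beta v u"
  unfolding Jfun_def coup_swap[of r1 r2 u v] by (simp add: algebra_simps)

lemma Pfun_swap: "Pfun s p q r1 r2 mu1 mu2 beta u v = Pfun s q p r2 r1 mu2 mu1 beta v u"
  unfolding Pfun_def coup_swap[of r1 r2 u v] by (simp add: algebra_simps)

lemma Pset_ab_swap:
  "(v, u) \<in> Pset_ab s q p r2 r1 mu2 mu1 beta b a \<longleftrightarrow> (u, v) \<in> Pset_ab s p q r1 r2 mu1 mu2 beta a b"
  unfolding Pset_ab_def using Pfun_swap[of s p q r1 r2 mu1 mu2 beta u v] by auto

lemma abs_powr_minus_two_mult_self: "\<bar>x::real\<bar> powr (p - 2) * x * x = \<bar>x\<bar> powr p"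
proof (cases "x = 0")
  case False
  have "\<bar>x\<bar> powr (p - 2 + 2) = \<bar>x\<bar> powr (p - 2) * \<bar>x\<bar> powr 2" by (rule powr_add)
  hence "\<bar>x\<bar> powr p = \<bar>x\<bar> powr (p - 2) * \<bar>x\<bar> powr 2" by simp
  also have "\<bar>x\<bar> powr 2 = x * x"
    using powr_realpow[of "\<bar>x\<bar>" 2] False by (simp add: power2_eq_square abs_mult_self_eq)
  finally show ?thesis by simp
qed simp

lemma Kfun_tested_with_self:
  assumes u: "u \<in> H1s s"
    and eq: "\<forall>\<phi> \<in> H1s s. (\<integral>z. dx u z * dx \<phi> z \<partial>lborel) + Efrac s u \<phi> + lam * (\<integral>z. u z * \<phi> z \<partial>lborel)
               = mu * (\<integral>z. \<bar>u z\<bar> powr (p - 2) * u z * \<phi> z \<partial>lborel) + N \<phi>"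
  shows "Kfun s u + lam * L2sq u = mu * Lpp p u + N u"
  using eq u unfolding Kfun_def L2sq_def Lpp_def
  by (simp add: power2_eq_square abs_powr_minus_two_mult_self)

lemma coup_tested_with_first:
  "(\<integral>z. \<bar>u z\<bar> powr (r1 - 2) * u z * \<bar>v z\<bar> powr r2 * u z \<partial>lborel) = coup r1 r2 u v"
proof -
  have "\<bar>x\<bar> powr (r1 - 2) * x * y * x = \<bar>x\<bar> powr r1 * y" for x y :: real
  proof -
    have "\<bar>x\<bar> powr (r1 - 2) * x * y * x = (\<bar>x\<bar> powr (r1 - 2) * x * x) * y" by (simp add: ac_simps)
    thus ?thesis by (simp only: abs_powr_minus_two_mult_self)
  qed
  thus ?thesis unfolding coup_def by (simp only:)
qed

lemma coup_tested_with_second: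
  "(\<integral>z. \<bar>u z\<bar> powr r1 * \<bar>v z\<bar> powr (r2 - 2) * v z * v z \<partial>lborel) = coup r1 r2 u v"
proof -
  have "y * \<bar>x\<bar> powr (r2 - 2) * x * x = y * \<bar>x\<bar> powr r2" for x y :: real
    by (simp only: mult.assoc[of y] abs_powr_minus_two_mult_self)
  thus ?thesis unfolding coup_def by (simp only:)
qed

section \<open>Saturation of the mass constraints\<close>

lemma pohozaev_fibre_of_critical_point:
  assumes s: "0 < s" "s < 1" and hpar: "mu1 > 0" "mu2 > 0" "beta > 0"
    and hp: "2 * (1 + 3 * s) / (1 + s) < p" and hq: "2 * (1 + 3 * s) / (1 + s) < q"
    and hr: "2 * (1 + 3 * s) / (1 + s) < r1 + r2"
    and P: "Pfun s p q r1 r2 mu1 mu2 beta u v = 0"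
    and E: "Kfun s u + lam * L2sq u = mu1 * Lpp p u + beta * r1 * coup r1 r2 u v"
    and lam: "0 < lam * L2sq u"
  shows "pohozaev_fibre s p r1 (Kfun s u) (Kfun s v) (mu1 / p * Lpp p u) (mu2 / q * Lpp q v)
           (beta * coup r1 r2 u v) ((1 + s) * (p - 2) / 2) ((1 + s) * (q - 2) / 2)
           ((1 + s) * (r1 + r2 - 2) / 2)"
proof
  note gp = exponent_gaps[OF s(1) hp] and gq = exponent_gaps[OF s(1) hq]
  show "0 < s" by (fact s(1))
  show "2 * s < (1 + s) * (p - 2) / 2" "2 * s < (1 + s) * (q - 2) / 2"
    "2 * s < (1 + s) * (r1 + r2 - 2) / 2"
    using gp gq exponent_gaps[OF s(1) hr] by simp_all
  show "0 \<le> Kfun s u" "0 \<le> Kfun s v" using Kfun_nonneg[OF s] by auto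
  show "0 \<le> mu1 / p * Lpp p u" "0 \<le> mu2 / q * Lpp q v" "0 \<le> beta * coup r1 r2 u v"
    using hpar gp(2) gq(2) Lpp_nonneg coup_nonneg by auto
  show "s * (Kfun s u + Kfun s v) = (1 + s) * (p - 2) / 2 * (mu1 / p * Lpp p u)
      + (1 + s) * (q - 2) / 2 * (mu2 / q * Lpp q v) + (1 + s) * (r1 + r2 - 2) / 2 * (beta * coup r1 r2 u v)"
    using P gp(2) gq(2) unfolding Pfun_def by (simp add: field_simps)
  have "p * (mu1 / p * Lpp p u) = mu1 * Lpp p u" using gp(2) by simp
  moreover have "r1 * (beta * coup r1 r2 u v) = beta * r1 * coup r1 r2 u v" by simp
  ultimately show "Kfun s u < p * (mu1 / p * Lpp p u) + r1 * (beta * coup r1 r2 u v)"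
    using E lam by linarith
qed

text \<open>The amplitude bound \<open>t < sqrt (a / L2sq u)\<close> keeps the mass \<open>t\<^sup>2 L2sq u\<close> of the
  competitor below \<open>a\<close>.\<close>

lemma L2sq_eq_if_multiplier_pos:
  assumes s: "0 < s" "s < 1" and hpar: "mu1 > 0" "mu2 > 0" "beta > 0"
    and hp: "2 * (1 + 3 * s) / (1 + s) < p" and hq: "2 * (1 + 3 * s) / (1 + s) < q"
    and hr: "2 * (1 + 3 * s) / (1 + s) < r1 + r2"
    and uv: "(u, v) \<in> Pset_ab s p q r1 r2 mu1 mu2 beta a b"
    and nz: "\<not> (AE z in lborel. u z = 0)"
    and min: "\<And>w1 w2. (w1, w2) \<in> Pset_ab s p q r1 r2 mu1 mu2 beta a b \<Longrightarrow>
        Jfun s p q r1 r2 mu1 mu2 beta u v \<le> Jfun s p q r1 r2 mu1 mu2 beta w1 w2"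
    and E: "Kfun s u + lam * L2sq u = mu1 * Lpp p u + beta * r1 * coup r1 r2 u v"
    and lam: "lam > 0"
  shows "L2sq u = a"
proof (rule ccontr)
  have u: "u \<in> H1s s" and v: "v \<in> H1s s" and P: "Pfun s p q r1 r2 mu1 mu2 beta u v = 0"
    and La: "L2sq u \<le> a" and Lb: "L2sq v \<le> b"
    using uv by (auto simp: Pset_ab_def)
  have A: "0 < L2sq u"
    using AE_zero_iff_L2sq_zero[of u] nz u L2sq_def by (auto simp: H1s_def less_le)
  assume "L2sq u \<noteq> a"
  hence "1 < sqrt (a / L2sq u)" using La A by simp
  interpret fib: pohozaev_fibre s p r1 "Kfun s u" "Kfun s v" "mu1 / p * Lpp p u" "mu2 / q * Lpp q v"
      "beta * coup r1 r2 u v" "(1 + s) * (p - 2) / 2" "(1 + s) * (q - 2) / 2" "(1 + s) * (r1 + r2 - 2) / 2"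
    using A lam by (intro pohozaev_fibre_of_critical_point[OF s hpar hp hq hr P E]) simp
  obtain t \<sigma> where t: "1 < t" "t < sqrt (a / L2sq u)" and \<sigma>: "0 < \<sigma>" and G: "fib.G t \<sigma> = 0"
    and F: "fib.F t \<sigma> < fib.F 1 1"
    using fib.exists_descent[of "sqrt (a / L2sq u) - 1"] \<open>1 < sqrt (a / L2sq u)\<close> by auto
  define w1 where "w1 = fibre_scale s t \<sigma> u"
  define w2 where "w2 = fibre_scale s 1 \<sigma> v"
  have scaled: "Kfun s w1 = t\<^sup>2 * \<sigma> powr (2 * s) * Kfun s u" "Kfun s w2 = \<sigma> powr (2 * s) * Kfun s v"
    "Lpp p w1 = t powr p * \<sigma> powr ((1 + s) * (p - 2) / 2) * Lpp p u"
    "Lpp q w2 = \<sigma> powr ((1 + s) * (q - 2) / 2) * Lpp q v"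
    "coup r1 r2 w1 w2 = t powr r1 * \<sigma> powr ((1 + s) * (r1 + r2 - 2) / 2) * coup r1 r2 u v"
    unfolding w1_def w2_def using u v t \<sigma>
    by (simp_all add: Kfun_fibre_scale Lpp_fibre_scale coup_fibre_scale)
  have H1s: "w1 \<in> H1s s" "w2 \<in> H1s s"
    unfolding w1_def w2_def using H1s_fibre_scale u v \<sigma> by simp_all
  have [simp]: "L2sq w1 = t\<^sup>2 * L2sq u" "L2sq w2 = L2sq v"
    unfolding w1_def w2_def using L2sq_fibre_scale u v \<sigma> by simp_all
  have "t\<^sup>2 < (sqrt (a / L2sq u))\<^sup>2" using t by (intro power_strict_mono) auto
  hence "L2sq w1 \<le> a" using A La by (simp add: field_simps)
  moreover have "\<not> (AE z in lborel. w1 z = 0)"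
  proof -
    have "L2fun w1" using H1s by (simp add: H1s_def)
    thus ?thesis using AE_zero_iff_L2sq_zero[of w1] A t by simp
  qed
  moreover have "Pfun s p q r1 r2 mu1 mu2 beta w1 w2 = fib.G t \<sigma>"
    using exponent_gaps(2)[OF s(1) hp] exponent_gaps(2)[OF s(1) hq]
    unfolding Pfun_def fib.G_def scaled by (simp add: field_simps)
  ultimately have "(w1, w2) \<in> Pset_ab s p q r1 r2 mu1 mu2 beta a b"
    using G Lb H1s by (simp add: Pset_ab_def)
  hence "Jfun s p q r1 r2 mu1 mu2 beta u v \<le> Jfun s p q r1 r2 mu1 mu2 beta w1 w2" by (rule min)
  also have "\<dots> = fib.F t \<sigma>"
    unfolding Jfun_def fib.F_def scaled by (simp add: algebra_simps)
  also have "\<dots> < fib.F 1 1" by (fact F)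
  also have "\<dots> = Jfun s p q r1 r2 mu1 mu2 beta u v"
    unfolding Jfun_def fib.F_def by simp
  finally show False by simp
qed

theorem lemma5p2:
  fixes s mu1 mu2 beta r1 r2 p q a b lam1 lam2 :: real
    and u v :: "real \<times> real \<Rightarrow> real"
  assumes hs: "1/2 < s" "s < 1"
    and hpar: "mu1 > 0" "mu2 > 0" "beta > 0" "r1 > 1" "r2 > 1"
    and hp: "2 * (1 + 3 * s) / (1 + s) < p" "p < 2 * (1 + s) / (1 - s)"
    and hq: "2 * (1 + 3 * s) / (1 + s) < q" "q < 2 * (1 + s) / (1 - s)"
    and hr: "2 * (1 + 3 * s) / (1 + s) < r1 + r2" "r1 + r2 < 2 * (1 + s) / (1 - s)"
    and hab: "a > 0" "b > 0"
    and hP: "(u, v) \<in> Pset_ab s p q r1 r2 mu1 mu2 beta a b"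
    and hpos: "AE z in lborel. u z \<ge> 0" "AE z in lborel. v z \<ge> 0"
    and hnz: "\<not> (AE z in lborel. u z = 0)" "\<not> (AE z in lborel. v z = 0)"
    and hmin: "Jfun s p q r1 r2 mu1 mu2 beta u v = Cab s p q r1 r2 mu1 mu2 beta a b"
    and eq1: "\<forall>phi \<in> H1s s.
       (\<integral>z. dx u z * dx phi z \<partial>lborel) + Efrac s u phi + lam1 * (\<integral>z. u z * phi z \<partial>lborel)
       = mu1 * (\<integral>z. \<bar>u z\<bar> powr (p - 2) * u z * phi z \<partial>lborel)
         + beta * r1 * (\<integral>z. \<bar>u z\<bar> powr (r1 - 2) * u z * \<bar>v z\<bar> powr r2 * phi z \<partial>lborel)"
    and eq2: "\<forall>phi \<in> H1s s.
       (\<integral>z. dx v z * dx phi z \<partial>lborel) + Efrac s v phi + lam2 * (\<integral>z. v z * phi z \<partial>lborel)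
       = mu2 * (\<integral>z. \<bar>v z\<bar> powr (q - 2) * v z * phi z \<partial>lborel)
         + beta * r2 * (\<integral>z. \<bar>u z\<bar> powr r1 * \<bar>v z\<bar> powr (r2 - 2) * v z * phi z \<partial>lborel)"
  shows "(lam1 > 0 \<longrightarrow> L2sq u = a) \<and> (lam2 > 0 \<longrightarrow> L2sq v = b)"
proof -
  have s: "0 < s" "s < 1" using hs by simp_all
  have u: "u \<in> H1s s" and v: "v \<in> H1s s" using hP by (auto simp: Pset_ab_def)
  have min: "Jfun s p q r1 r2 mu1 mu2 beta u v \<le> Jfun s p q r1 r2 mu1 mu2 beta w1 w2"
    if "(w1, w2) \<in> Pset_ab s p q r1 r2 mu1 mu2 beta a b" for w1 w2
    using Cab_le_Jfun[OF s(1) hpar(1-3) hp(1) hq(1) hr(1) that] hmin by simp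
  have Eu: "Kfun s u + lam1 * L2sq u = mu1 * Lpp p u + beta * r1 * coup r1 r2 u v"
    using Kfun_tested_with_self[OF u eq1] by (simp add: coup_tested_with_first)
  have Ev: "Kfun s v + lam2 * L2sq v = mu2 * Lpp q v + beta * r2 * coup r2 r1 v u"
    using Kfun_tested_with_self[OF v eq2] by (simp add: coup_tested_with_second coup_swap)
  show ?thesis
  proof (intro conjI impI)
    assume "lam1 > 0"
    with min Eu show "L2sq u = a"
      by (intro L2sq_eq_if_multiplier_pos[OF s hpar(1-3) hp(1) hq(1) hr(1) hP hnz(1)])
  next
    assume "lam2 > 0"
    have hr': "2 * (1 + 3 * s) / (1 + s) < r2 + r1" using hr(1) by (simp add: add.commute)
    have vu: "(v, u) \<in> Pset_ab s q p r2 r1 mu2 mu1 beta b a" using hP by (simp add: Pset_ab_swap)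
    have "Jfun s q p r2 r1 mu2 mu1 beta v u \<le> Jfun s q p r2 r1 mu2 mu1 beta w1 w2"
      if "(w1, w2) \<in> Pset_ab s q p r2 r1 mu2 mu1 beta b a" for w1 w2
      using min[of w2 w1] that by (simp add: Pset_ab_swap Jfun_swap[of s p q r1 r2 mu1 mu2 beta])
    from L2sq_eq_if_multiplier_pos[OF s hpar(2,1,3) hq(1) hp(1) hr' vu hnz(2) this Ev \<open>lam2 > 0\<close>]
    show "L2sq v = b" .
  qed
qed
end
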